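(* Let $S$ be a dense subsemigroup of $((0,\infty),+)$ and let $\mathcal{K}=\{A\subseteq S: S\setminus A \text{ is not piecewise syndetic near zero}\}$. Then $\mathcal{K}$ is a filter on $S$, $\mathrm{Cl}\,K(O^{+}(S))=\overline{\mathcal{K}}$, and this set is a compact subsemigroup of $\beta S$.
   Context: "Dense" means dense in the usual topology of $(0,\infty)$. $\beta S$ is the Stone–Čech compactification of the discrete set $S$ (ultrafilters on $S$), with $+$ extended so that $(\beta S,+)$ is a compact right topological semigroup: $A\in p+q$ iff $\{x\in S:-x+A\in q\}\in p$, where $-x+A=\{y\in S:x+y\in A\}$. $O^{+}(S)=\{p\in\beta S: S\cap(0,\epsilon)\in p\text{ for every }\epsilon>0\}$, a compact right topological subsemigroup of $\beta S$; $K(O^{+}(S))$ is its smallest two-sided ideal and $\mathrm{Cl}$ denotes closure in $\beta S$. For a filter $\mathcal{K}$ on $S$, $\overline{\mathcal{K}}=\{p\in\beta S:\mathcal{K}\subseteq p\}$. A subset $A\subseteq S$ is piecewise syndetic near zero iff there exist sequences $\langle F_n\rangle_{n=1}^\infty$ and $\langle\delta_n\rangle_{n=1}^\infty$ such that (1) for each $n\in\mathbb{N}$, $F_n$ is a finite nonempty subset of $(0,\frac1n)\cap S$ and $\delta_n\in(0,\frac1n)$, and (2) for every finite nonempty $G\subseteq S$ and every $\mu>0$ there is $x\in(0,\mu)\cap S$ such that for all $n\in\mathbb{N}$, $(G\cap(0,\delta_n))+x\subseteq\bigcup_{t\in F_n}(-t+A)$. *)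

theory Defs
  imports "HOL-Analysis.Analysis"
begin

definition dense_subsemigroup :: "real set \<Rightarrow> bool" where
  "dense_subsemigroup S \<longleftrightarrow> S \<subseteq> {0<..} \<and> (\<forall>x\<in>S. \<forall>y\<in>S. x + y \<in> S)
     \<and> (\<forall>a b. 0 < a \<and> a < b \<longrightarrow> (\<exists>s\<in>S. a < s \<and> s < b))"

definition ltrans :: "real set \<Rightarrow> real \<Rightarrow> real set \<Rightarrow> real set" where
  "ltrans S x A = {y \<in> S. x + y \<in> A}"

definition filter_on :: "real set \<Rightarrow> real set set \<Rightarrow> bool" where
  "filter_on S F \<longleftrightarrow> F \<subseteq> Pow S \<and> S \<in> F \<and> {} \<notin> F
     \<and> (\<forall>A\<in>F. \<forall>B\<in>F. A \<inter> B \<in> F)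
     \<and> (\<forall>A\<in>F. \<forall>B. A \<subseteq> B \<and> B \<subseteq> S \<longrightarrow> B \<in> F)"

definition ultrafilter_on :: "real set \<Rightarrow> real set set \<Rightarrow> bool" where
  "ultrafilter_on S p \<longleftrightarrow> filter_on S p \<and> (\<forall>A. A \<subseteq> S \<longrightarrow> A \<in> p \<or> S - A \<in> p)"

definition betaS :: "real set \<Rightarrow> real set set set" where
  "betaS S = {p. ultrafilter_on S p}"

definition betaTop :: "real set \<Rightarrow> real set set topology" where
  "betaTop S = topology_generated_by {{p \<in> betaS S. A \<in> p} | A. A \<subseteq> S}"

definition bplus :: "real set \<Rightarrow> real set set \<Rightarrow> real set set \<Rightarrow> real set set" where
  "bplus S p q = {A. A \<subseteq> S \<and> {x \<in> S. ltrans S x A \<in> q} \<in> p}"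

definition Oplus :: "real set \<Rightarrow> real set set set" where
  "Oplus S = {p \<in> betaS S. \<forall>\<epsilon>>0. S \<inter> {0<..<\<epsilon>} \<in> p}"

definition two_sided_ideal :: "real set \<Rightarrow> real set set set \<Rightarrow> real set set set \<Rightarrow> bool" where
  "two_sided_ideal S T I \<longleftrightarrow> I \<noteq> {} \<and> I \<subseteq> T
     \<and> (\<forall>p\<in>T. \<forall>q\<in>I. bplus S p q \<in> I \<and> bplus S q p \<in> I)"

definition Kmin :: "real set \<Rightarrow> real set set set \<Rightarrow> real set set set" where
  "Kmin S T = (THE I. two_sided_ideal S T I \<and> (\<forall>J. two_sided_ideal S T J \<longrightarrow> I \<subseteq> J))"

definition pw_syndetic_near_zero :: "real set \<Rightarrow> real set \<Rightarrow> bool" where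
  "pw_syndetic_near_zero S A \<longleftrightarrow>
    (\<exists>F :: nat \<Rightarrow> real set. \<exists>\<delta> :: nat \<Rightarrow> real.
       (\<forall>n\<ge>1. finite (F n) \<and> F n \<noteq> {} \<and> F n \<subseteq> {0<..<1 / real n} \<inter> S
              \<and> 0 < \<delta> n \<and> \<delta> n < 1 / real n)
     \<and> (\<forall>G. finite G \<and> G \<noteq> {} \<and> G \<subseteq> S \<longrightarrow>
          (\<forall>\<mu>>0. \<exists>x\<in>S. 0 < x \<and> x < \<mu> \<and>
             (\<forall>n\<ge>1. (\<lambda>g. g + x) ` (G \<inter> {0<..<\<delta> n}) \<subseteq> (\<Union>t\<in>F n. ltrans S t A)))))"

definition Kfilt :: "real set \<Rightarrow> real set set" where
  "Kfilt S = {A. A \<subseteq> S \<and> \<not> pw_syndetic_near_zero S (S - A)}"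

definition filter_closure :: "real set \<Rightarrow> real set set \<Rightarrow> real set set set" where
  "filter_closure S K = {p \<in> betaS S. K \<subseteq> p}"

end

theory Submission
  imports Defs
begin

(* A set is piecewise syndetic near zero iff its closure in beta S meets the smallest ideal
   K of O+(S).  Hence the filter in question consists of the sets lying in every ultrafilter
   of K; its ultrafilter closure is exactly Cl K, and in the compact right topological
   semigroup O+(S) the closure of an ideal is a compact subsemigroup.

   For the characterization, K is the union of the minimal left ideals L of O+(S), each of
   them compact as the image O+(S) + q of a continuous right translation.  If A \<in> p \<in> L,
   then p \<in> O+(S) + q gives every q \<in> L some small x with -x + A \<in> q, and compactness of L
   makes finitely many such x suffice at each scale 1/n.  Conversely, the witnesses of
   piecewise syndeticity generate an ultrafilter q \<in> O+(S) such that every element of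
   O+(S) + q contains the n-th union of translates of A; choosing one translate -t_n + A per n
   inside some w \<in> K and an ultrafilter u concentrating on {t_n} yields A \<in> u + w \<in> K. *)

section \<open>Ultrafilters on a set\<close>

lemma ultrafilter_on_subset: "ultrafilter_on S p \<Longrightarrow> A \<in> p \<Longrightarrow> A \<subseteq> S"
  by (auto simp: ultrafilter_on_def filter_on_def)

lemma ultrafilter_on_top: "ultrafilter_on S p \<Longrightarrow> S \<in> p"
  by (simp add: ultrafilter_on_def filter_on_def)

lemma ultrafilter_on_empty: "ultrafilter_on S p \<Longrightarrow> {} \<notin> p"
  by (simp add: ultrafilter_on_def filter_on_def)

lemma ultrafilter_on_Int: "ultrafilter_on S p \<Longrightarrow> A \<in> p \<Longrightarrow> B \<in> p \<Longrightarrow> A \<inter> B \<in> p"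
  by (simp add: ultrafilter_on_def filter_on_def)

lemma ultrafilter_on_mono: "ultrafilter_on S p \<Longrightarrow> A \<in> p \<Longrightarrow> A \<subseteq> B \<Longrightarrow> B \<subseteq> S \<Longrightarrow> B \<in> p"
  unfolding ultrafilter_on_def filter_on_def by blast

lemma ultrafilter_on_Diff_iff:
  assumes p: "ultrafilter_on S p" and "A \<subseteq> S" shows "S - A \<in> p \<longleftrightarrow> A \<notin> p"
proof
  assume "S - A \<in> p"
  then show "A \<notin> p" using ultrafilter_on_Int[OF p, of A "S - A"] ultrafilter_on_empty[OF p] by auto
next
  assume "A \<notin> p"
  then show "S - A \<in> p" using p \<open>A \<subseteq> S\<close> unfolding ultrafilter_on_def by blast
qed

lemma ultrafilter_on_Un:
  assumes p: "ultrafilter_on S p" and "A \<union> B \<in> p" shows "A \<in> p \<or> B \<in> p"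
proof -
  have "A \<subseteq> S" "B \<subseteq> S" using ultrafilter_on_subset[OF p \<open>A \<union> B \<in> p\<close>] by auto
  have "(A \<union> B) \<inter> ((S - A) \<inter> (S - B)) = {}" by blast
  then have "(A \<union> B) \<inter> ((S - A) \<inter> (S - B)) \<notin> p" using ultrafilter_on_empty[OF p] by simp
  then show ?thesis
    using assms ultrafilter_on_Int[OF p] ultrafilter_on_Diff_iff[OF p \<open>A \<subseteq> S\<close>]
      ultrafilter_on_Diff_iff[OF p \<open>B \<subseteq> S\<close>] by blast
qed

lemma ultrafilter_on_UN:
  assumes p: "ultrafilter_on S p"
  shows "finite I \<Longrightarrow> (\<Union>i\<in>I. C i) \<in> p \<Longrightarrow> \<exists>i\<in>I. C i \<in> p"
proof (induction I rule: finite_induct)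
  case empty
  then show ?case using ultrafilter_on_empty[OF p] by simp
next
  case (insert i I)
  then show ?case using ultrafilter_on_Un[OF p] by auto
qed

lemma ultrafilter_on_Inter:
  assumes p: "ultrafilter_on S p"
  shows "finite F \<Longrightarrow> F \<subseteq> p \<Longrightarrow> S \<inter> \<Inter>F \<in> p"
proof (induction F rule: finite_induct)
  case empty
  then show ?case using ultrafilter_on_top[OF p] by simp
next
  case (insert A F)
  then have "A \<inter> (S \<inter> \<Inter>F) \<in> p" using ultrafilter_on_Int[OF p] by simp
  then show ?case by (simp add: Int_left_commute)
qed

lemma ultrafilter_on_eqI:
  assumes p: "ultrafilter_on S p" and q: "ultrafilter_on S q" and "p \<subseteq> q"
  shows "p = q"
proof
  show "q \<subseteq> p"
  proof
    fix A assume "A \<in> q"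
    then have "S - A \<notin> q" "A \<subseteq> S"
      using ultrafilter_on_Diff_iff[OF q] ultrafilter_on_subset[OF q] by auto
    then show "A \<in> p" using ultrafilter_on_Diff_iff[OF p] \<open>p \<subseteq> q\<close> by blast
  qed
qed fact

lemma filter_on_Inter_ultrafilters:
  assumes "X \<noteq> {}" and X: "\<And>p. p \<in> X \<Longrightarrow> ultrafilter_on S p"
  shows "filter_on S (\<Inter>X)"
  unfolding filter_on_def
proof (intro conjI ballI allI impI)
  obtain p where p: "p \<in> X" using assms(1) by blast
  show "\<Inter>X \<subseteq> Pow S" using ultrafilter_on_subset[OF X[OF p]] p by blast
  show "{} \<notin> \<Inter>X" using ultrafilter_on_empty[OF X[OF p]] p by blast
  show "S \<in> \<Inter>X" using ultrafilter_on_top[OF X] by blast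
next
  fix A B assume "A \<in> \<Inter>X" "B \<in> \<Inter>X"
  then show "A \<inter> B \<in> \<Inter>X" using ultrafilter_on_Int[OF X] by blast
next
  fix A B assume "A \<in> \<Inter>X" "A \<subseteq> B \<and> B \<subseteq> S"
  then show "B \<in> \<Inter>X" using ultrafilter_on_mono[OF X] by blast
qed

definition fip_on :: "real set \<Rightarrow> real set set \<Rightarrow> bool" where
  "fip_on S M \<longleftrightarrow> (\<forall>F. finite F \<and> F \<subseteq> M \<longrightarrow> S \<inter> \<Inter>F \<noteq> {})"

lemma fip_on_insert_iff:
  "fip_on S (insert A M) \<longleftrightarrow> fip_on S M \<and> (\<forall>G. finite G \<and> G \<subseteq> M \<longrightarrow> S \<inter> \<Inter>G \<inter> A \<noteq> {})"
proof (intro iffI conjI allI impI)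
  assume H: "fip_on S (insert A M)"
  then show "fip_on S M" unfolding fip_on_def by blast
  fix G assume "finite G \<and> G \<subseteq> M"
  then have "S \<inter> \<Inter>(insert A G) \<noteq> {}" using H unfolding fip_on_def by blast
  then show "S \<inter> \<Inter>G \<inter> A \<noteq> {}" by (simp add: Int_ac)
next
  assume H: "fip_on S M \<and> (\<forall>G. finite G \<and> G \<subseteq> M \<longrightarrow> S \<inter> \<Inter>G \<inter> A \<noteq> {})"
  show "fip_on S (insert A M)"
    unfolding fip_on_def
  proof (intro allI impI)
    fix F assume F: "finite F \<and> F \<subseteq> insert A M"
    then have "finite (F - {A}) \<and> F - {A} \<subseteq> M" by blast
    then have "S \<inter> \<Inter>(F - {A}) \<inter> A \<noteq> {}" using H by blast
    moreover have "S \<inter> \<Inter>(F - {A}) \<inter> A \<subseteq> S \<inter> \<Inter>F" by auto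
    ultimately show "S \<inter> \<Inter>F \<noteq> {}" by blast
  qed
qed

lemma maximal_fip_on_ultrafilter:
  assumes M: "M \<subseteq> Pow S" "fip_on S M"
    and max: "\<And>A. A \<subseteq> S \<Longrightarrow> fip_on S (insert A M) \<Longrightarrow> A \<in> M"
  shows "ultrafilter_on S M"
proof -
  have fip: "S \<inter> \<Inter>G \<noteq> {}" if "finite G" "G \<subseteq> M" for G
    using M(2) that by (simp add: fip_on_def)
  have mem: "A \<in> M" if A: "A \<subseteq> S" and F: "finite F" "F \<subseteq> M" "S \<inter> \<Inter>F \<subseteq> A" for A F
  proof (rule max[OF A])
    have "S \<inter> \<Inter>G \<inter> A \<noteq> {}" if "finite G \<and> G \<subseteq> M" for G
    proof -
      have "S \<inter> \<Inter>(G \<union> F) \<noteq> {}" using that F by (intro fip) auto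
      then show ?thesis using F(3) by blast
    qed
    then show "fip_on S (insert A M)" using M(2) fip_on_insert_iff by blast
  qed
  have "S \<in> M" by (rule mem[of S "{}"]) auto
  moreover have "{} \<notin> M" using fip[of "{{}}"] by auto
  moreover have "A \<inter> B \<in> M" if "A \<in> M" "B \<in> M" for A B
    using M(1) that by (intro mem[of _ "{A, B}"]) auto
  moreover have "B \<in> M" if "A \<in> M" "A \<subseteq> B" "B \<subseteq> S" for A B
    using that by (intro mem[of _ "{A}"]) auto
  moreover have "A \<in> M \<or> S - A \<in> M" if A: "A \<subseteq> S" for A
  proof (rule ccontr)
    have witness: "\<exists>G. finite G \<and> G \<subseteq> M \<and> S \<inter> \<Inter>G \<inter> B = {}" if "B \<subseteq> S" "B \<notin> M" for B
      using max[OF that(1)] fip_on_insert_iff[of S B M] M(2) that(2) by blast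
    assume "\<not> (A \<in> M \<or> S - A \<in> M)"
    then obtain G1 G2 where "finite G1" "G1 \<subseteq> M" "S \<inter> \<Inter>G1 \<inter> A = {}"
      and "finite G2" "G2 \<subseteq> M" "S \<inter> \<Inter>G2 \<inter> (S - A) = {}"
      using witness[OF A] witness[of "S - A"] by blast
    moreover have "S \<inter> \<Inter>(G1 \<union> G2) \<noteq> {}"
      using calculation by (intro fip) auto
    ultimately show False by blast
  qed
  ultimately show ?thesis
    using M(1) unfolding ultrafilter_on_def filter_on_def by blast
qed

lemma ultrafilter_extends_fip_on:
  assumes "\<B> \<subseteq> Pow S" "fip_on S \<B>"
  shows "\<exists>p. ultrafilter_on S p \<and> \<B> \<subseteq> p"
proof -
  define \<A> where "\<A> = {M. \<B> \<subseteq> M \<and> M \<subseteq> Pow S \<and> fip_on S M}"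
  have "\<exists>M\<in>\<A>. \<forall>X\<in>\<A>. M \<subseteq> X \<longrightarrow> X = M"
  proof (rule subset_Zorn_nonempty)
    show "\<A> \<noteq> {}" using assms unfolding \<A>_def by blast
    fix C assume "C \<noteq> {}" and C: "subset.chain \<A> C"
    then obtain X where "X \<in> C" by blast
    have CA: "\<And>X. X \<in> C \<Longrightarrow> \<B> \<subseteq> X \<and> X \<subseteq> Pow S \<and> fip_on S X"
      using C unfolding subset_chain_def \<A>_def by blast
    have "fip_on S (\<Union>C)"
      unfolding fip_on_def
    proof (intro allI impI)
      fix F assume F: "finite F \<and> F \<subseteq> \<Union>C"
      obtain Y where "Y \<in> C" "F \<subseteq> Y"
        by (rule finite_subset_Union_chain[OF _ _ \<open>C \<noteq> {}\<close> C]) (use F in auto)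
      moreover have "fip_on S Y" using CA[OF \<open>Y \<in> C\<close>] by blast
      ultimately show "S \<inter> \<Inter>F \<noteq> {}"
        using F unfolding fip_on_def by blast
    qed
    moreover have "\<B> \<subseteq> \<Union>C" using CA[OF \<open>X \<in> C\<close>] \<open>X \<in> C\<close> by blast
    moreover have "\<Union>C \<subseteq> Pow S" using CA by blast
    ultimately show "\<Union>C \<in> \<A>" by (simp add: \<A>_def)
  qed
  then obtain M where "M \<in> \<A>" and max: "\<And>X. X \<in> \<A> \<Longrightarrow> M \<subseteq> X \<Longrightarrow> X = M"
    by blast
  then have M: "\<B> \<subseteq> M" "M \<subseteq> Pow S" "fip_on S M" by (simp_all add: \<A>_def)
  have "ultrafilter_on S M"
  proof (rule maximal_fip_on_ultrafilter[OF M(2,3)])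
    fix A assume "A \<subseteq> S" "fip_on S (insert A M)"
    then have "insert A M \<in> \<A>" using M by (auto simp: \<A>_def)
    then show "A \<in> M" using max by blast
  qed
  then show ?thesis using M by blast
qed

lemma ultrafilter_extends_directed:
  assumes sub: "\<And>i. i \<in> I \<Longrightarrow> Y i \<subseteq> S" and ne: "\<And>i. i \<in> I \<Longrightarrow> Y i \<noteq> {}"
    and dir: "\<And>J. finite J \<Longrightarrow> J \<subseteq> I \<Longrightarrow> \<exists>i\<in>I. \<forall>j\<in>J. Y i \<subseteq> Y j"
  shows "\<exists>p. ultrafilter_on S p \<and> (\<forall>i\<in>I. Y i \<in> p)"
proof -
  have "fip_on S (Y ` I)"
    unfolding fip_on_def
  proof (intro allI impI)
    fix F assume "finite F \<and> F \<subseteq> Y ` I"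
    then obtain J where J: "J \<subseteq> I" "finite J" "F = Y ` J"
      by (meson finite_subset_image)
    then obtain i where "i \<in> I" "\<forall>j\<in>J. Y i \<subseteq> Y j" using dir by blast
    then have "Y i \<subseteq> S \<inter> \<Inter>F" using J sub by auto
    then show "S \<inter> \<Inter>F \<noteq> {}" using ne \<open>i \<in> I\<close> by blast
  qed
  then show ?thesis
    using ultrafilter_extends_fip_on[of "Y ` I" S] sub by blast
qed

section \<open>The topology of \<open>\<beta>S\<close>\<close>

definition beta_hat :: "real set \<Rightarrow> real set \<Rightarrow> real set set set" where
  "beta_hat S A = {p \<in> betaS S. A \<in> p}"

lemma mem_betaS [simp]: "p \<in> betaS S \<longleftrightarrow> ultrafilter_on S p"
  by (simp add: betaS_def)

lemma mem_beta_hat: "p \<in> beta_hat S A \<longleftrightarrow> ultrafilter_on S p \<and> A \<in> p"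
  by (simp add: beta_hat_def)

lemma topspace_betaTop [simp]: "topspace (betaTop S) = betaS S"
proof -
  have "\<Union>{{p \<in> betaS S. A \<in> p} | A. A \<subseteq> S} = betaS S"
  proof
    show "betaS S \<subseteq> \<Union>{{p \<in> betaS S. A \<in> p} | A. A \<subseteq> S}"
    proof
      fix p assume "p \<in> betaS S"
      then have "p \<in> {q \<in> betaS S. S \<in> q}" using ultrafilter_on_top by auto
      then show "p \<in> \<Union>{{p \<in> betaS S. A \<in> p} | A. A \<subseteq> S}" by blast
    qed
  qed auto
  then show ?thesis unfolding betaTop_def topology_generated_by_topspace .
qed

lemma openin_beta_hat: "A \<subseteq> S \<Longrightarrow> openin (betaTop S) (beta_hat S A)"
  unfolding betaTop_def beta_hat_def by (rule topology_generated_by_Basis) blast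

lemma beta_hat_Int: "A \<subseteq> S \<Longrightarrow> beta_hat S (A \<inter> B) \<subseteq> beta_hat S A"
  using ultrafilter_on_mono by (fastforce simp: mem_beta_hat)

lemma openin_betaTop_imp_beta_hat:
  assumes "openin (betaTop S) U" and "p \<in> U"
  shows "\<exists>A. p \<in> beta_hat S A \<and> beta_hat S A \<subseteq> U"
proof -
  have "generate_topology_on {{p \<in> betaS S. A \<in> p} | A. A \<subseteq> S} U"
    using assms(1) by (simp add: betaTop_def openin_topology_generated_by_iff)
  then have "\<forall>p\<in>U. \<exists>A. p \<in> beta_hat S A \<and> beta_hat S A \<subseteq> U"
  proof (induction rule: generate_topology_on.induct)
    case (Int U V)
    show ?case
    proof
      fix p assume "p \<in> U \<inter> V"
      then obtain A B where A: "p \<in> beta_hat S A" "beta_hat S A \<subseteq> U"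
        and B: "p \<in> beta_hat S B" "beta_hat S B \<subseteq> V"
        using Int.IH by blast
      then have p: "ultrafilter_on S p" "A \<in> p" "B \<in> p" by (auto simp: mem_beta_hat)
      then have "A \<subseteq> S" "B \<subseteq> S" "A \<inter> B \<in> p"
        using ultrafilter_on_subset[OF p(1)] ultrafilter_on_Int[OF p(1)] by auto
      then have "p \<in> beta_hat S (A \<inter> B)" "beta_hat S (A \<inter> B) \<subseteq> U \<inter> V"
        using A B beta_hat_Int[of A S B] beta_hat_Int[of B S A]
        by (auto simp: mem_beta_hat Int_commute)
      then show "\<exists>C. p \<in> beta_hat S C \<and> beta_hat S C \<subseteq> U \<inter> V" by blast
    qed
  next
    case (UN K)
    show ?case
    proof
      fix p assume "p \<in> \<Union>K"
      then obtain U where "U \<in> K" "p \<in> U" by blast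
      then obtain A where "p \<in> beta_hat S A" "beta_hat S A \<subseteq> U" using UN.IH by blast
      then show "\<exists>A. p \<in> beta_hat S A \<and> beta_hat S A \<subseteq> \<Union>K" using \<open>U \<in> K\<close> by blast
    qed
  next
    case (Basis U)
    then obtain A where "U = beta_hat S A" by (auto simp: beta_hat_def)
    then show ?case by blast
  qed simp
  then show ?thesis using assms(2) by blast
qed

lemma in_closure_of_betaTop:
  assumes "X \<subseteq> betaS S"
  shows "p \<in> betaTop S closure_of X \<longleftrightarrow> ultrafilter_on S p \<and> (\<forall>A\<in>p. \<exists>x\<in>X. A \<in> x)"
proof -
  have "(\<forall>T. p \<in> T \<and> openin (betaTop S) T \<longrightarrow> (\<exists>y. y \<in> X \<and> y \<in> T)) \<longleftrightarrow> (\<forall>A\<in>p. \<exists>x\<in>X. A \<in> x)"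
    if p: "ultrafilter_on S p"
  proof
    assume H: "\<forall>T. p \<in> T \<and> openin (betaTop S) T \<longrightarrow> (\<exists>y. y \<in> X \<and> y \<in> T)"
    show "\<forall>A\<in>p. \<exists>x\<in>X. A \<in> x"
    proof
      fix A assume "A \<in> p"
      then have "p \<in> beta_hat S A" "openin (betaTop S) (beta_hat S A)"
        using p openin_beta_hat ultrafilter_on_subset[OF p] by (auto simp: mem_beta_hat)
      then obtain x where "x \<in> X" "x \<in> beta_hat S A" using H by blast
      then show "\<exists>x\<in>X. A \<in> x" by (auto simp: mem_beta_hat)
    qed
  next
    assume H: "\<forall>A\<in>p. \<exists>x\<in>X. A \<in> x"
    show "\<forall>T. p \<in> T \<and> openin (betaTop S) T \<longrightarrow> (\<exists>y. y \<in> X \<and> y \<in> T)"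
    proof (intro allI impI)
      fix T assume "p \<in> T \<and> openin (betaTop S) T"
      then obtain A where A: "p \<in> beta_hat S A" "beta_hat S A \<subseteq> T"
        using openin_betaTop_imp_beta_hat by blast
      then obtain x where "x \<in> X" "A \<in> x" using H by (auto simp: mem_beta_hat)
      then have "x \<in> beta_hat S A" using assms by (auto simp: mem_beta_hat)
      then show "\<exists>y. y \<in> X \<and> y \<in> T" using A \<open>x \<in> X\<close> by blast
    qed
  qed
  then show ?thesis by (auto simp: in_closure_of)
qed

lemma ultrafilter_adherent_iff_Inter_subset:
  assumes X: "X \<subseteq> betaS S" and p: "ultrafilter_on S p"
  shows "(\<forall>A\<in>p. \<exists>x\<in>X. A \<in> x) \<longleftrightarrow> \<Inter>X \<subseteq> p"
proof
  assume H: "\<forall>A\<in>p. \<exists>x\<in>X. A \<in> x"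
  show "\<Inter>X \<subseteq> p"
  proof
    fix B assume B: "B \<in> \<Inter>X"
    obtain x where "x \<in> X" using H ultrafilter_on_top[OF p] by blast
    then have x: "ultrafilter_on S x" "B \<in> x" using B X by auto
    then have "B \<subseteq> S" using ultrafilter_on_subset by blast
    show "B \<in> p"
    proof (rule ccontr)
      assume "B \<notin> p"
      then obtain y where "y \<in> X" "S - B \<in> y"
        using H ultrafilter_on_Diff_iff[OF p \<open>B \<subseteq> S\<close>] by blast
      moreover have "ultrafilter_on S y" "B \<in> y" using \<open>y \<in> X\<close> B X by auto
      ultimately show False using ultrafilter_on_Diff_iff[OF _ \<open>B \<subseteq> S\<close>] by blast
    qed
  qed
next
  assume H: "\<Inter>X \<subseteq> p"
  show "\<forall>A\<in>p. \<exists>x\<in>X. A \<in> x"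
  proof (intro ballI, rule ccontr)
    fix A assume "A \<in> p" "\<not> (\<exists>x\<in>X. A \<in> x)"
    moreover have "A \<subseteq> S" using ultrafilter_on_subset[OF p \<open>A \<in> p\<close>] .
    ultimately have "S - A \<in> \<Inter>X"
      using X ultrafilter_on_Diff_iff[of S _ A] by auto
    then show False
      using H \<open>A \<in> p\<close> ultrafilter_on_Diff_iff[OF p \<open>A \<subseteq> S\<close>] by blast
  qed
qed

lemma closure_of_betaTop_eq_filter_closure:
  assumes X: "X \<subseteq> betaS S"
  shows "betaTop S closure_of X = filter_closure S (\<Inter>X)"
proof (rule set_eqI)
  fix p
  have "p \<in> filter_closure S (\<Inter>X) \<longleftrightarrow> ultrafilter_on S p \<and> \<Inter>X \<subseteq> p"
    by (simp add: filter_closure_def)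
  then show "p \<in> betaTop S closure_of X \<longleftrightarrow> p \<in> filter_closure S (\<Inter>X)"
    using ultrafilter_adherent_iff_Inter_subset[OF X, of p] in_closure_of_betaTop[OF X, of p] by metis
qed

lemma closedin_beta_hat:
  assumes "A \<subseteq> S" shows "closedin (betaTop S) (beta_hat S A)"
proof -
  have "betaS S - beta_hat S A = beta_hat S (S - A)"
    using ultrafilter_on_Diff_iff assms by (auto simp: mem_beta_hat)
  moreover have "beta_hat S A \<subseteq> betaS S" by (auto simp: beta_hat_def)
  ultimately show ?thesis
    using openin_beta_hat[of "S - A" S] by (simp add: closedin_def)
qed

lemma Hausdorff_space_betaTop: "Hausdorff_space (betaTop S)"
  unfolding Hausdorff_space_def
proof (intro allI impI)
  fix p q assume "p \<in> topspace (betaTop S) \<and> q \<in> topspace (betaTop S) \<and> p \<noteq> q"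
  then have p: "ultrafilter_on S p" and q: "ultrafilter_on S q" and "p \<noteq> q" by auto
  then obtain A where A: "A \<in> p" "A \<notin> q"
    using ultrafilter_on_eqI by blast
  then have "A \<subseteq> S" using ultrafilter_on_subset[OF p] by blast
  then have "S - A \<in> q" using ultrafilter_on_Diff_iff[OF q] A by blast
  moreover have "disjnt (beta_hat S A) (beta_hat S (S - A))"
    using ultrafilter_on_Diff_iff \<open>A \<subseteq> S\<close> by (auto simp: disjnt_def mem_beta_hat)
  ultimately show "\<exists>U V. openin (betaTop S) U \<and> openin (betaTop S) V \<and> p \<in> U \<and> q \<in> V \<and> disjnt U V"
    using openin_beta_hat[OF \<open>A \<subseteq> S\<close>] openin_beta_hat[of "S - A" S] A p q
    by (intro exI[of _ "beta_hat S A"] exI[of _ "beta_hat S (S - A)"]) (auto simp: mem_beta_hat)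
qed

lemma betaS_finite_subcover:
  assumes A: "\<And>p. ultrafilter_on S p \<Longrightarrow> A p \<in> p"
  shows "\<exists>P. finite P \<and> P \<subseteq> betaS S \<and> betaS S \<subseteq> (\<Union>p\<in>P. beta_hat S (A p))"
proof (rule ccontr)
  assume no_cover: "\<not> ?thesis"
  have "fip_on S ((\<lambda>p. S - A p) ` betaS S)"
    unfolding fip_on_def
  proof (intro allI impI)
    fix F assume "finite F \<and> F \<subseteq> (\<lambda>p. S - A p) ` betaS S"
    then obtain P where P: "finite P" "P \<subseteq> betaS S" "F = (\<lambda>p. S - A p) ` P"
      by (meson finite_subset_image)
    have "\<not> betaS S \<subseteq> (\<Union>p\<in>P. beta_hat S (A p))" using no_cover P by blast
    then obtain x where "x \<in> betaS S" "x \<notin> (\<Union>p\<in>P. beta_hat S (A p))" by blast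
    then have x: "ultrafilter_on S x" "\<forall>p\<in>P. A p \<notin> x" by (auto simp: mem_beta_hat)
    have "F \<subseteq> x"
    proof
      fix B assume "B \<in> F"
      then obtain p where "p \<in> P" "B = S - A p" using P by blast
      moreover have "ultrafilter_on S p" using \<open>p \<in> P\<close> P by auto
      then have "A p \<subseteq> S" using A ultrafilter_on_subset by blast
      ultimately show "B \<in> x" using x ultrafilter_on_Diff_iff[OF x(1) \<open>A p \<subseteq> S\<close>] by simp
    qed
    moreover have "finite F" using P by simp
    ultimately have "S \<inter> \<Inter>F \<in> x" using ultrafilter_on_Inter[OF x(1)] by simp
    then show "S \<inter> \<Inter>F \<noteq> {}" using ultrafilter_on_empty[OF x(1)] by metis
  qed
  then obtain v where v: "ultrafilter_on S v" "(\<lambda>p. S - A p) ` betaS S \<subseteq> v"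
    using ultrafilter_extends_fip_on[of "(\<lambda>p. S - A p) ` betaS S" S] by blast
  then have "S - A v \<in> v" by (auto simp: image_subset_iff)
  then show False
    using A[OF v(1)] ultrafilter_on_Diff_iff[OF v(1)] ultrafilter_on_subset[OF v(1)] by blast
qed

lemma compact_space_betaTop: "compact_space (betaTop S)"
  unfolding compact_space_alt topspace_betaTop
proof (intro allI impI)
  fix \<U> assume \<U>: "(\<forall>U\<in>\<U>. openin (betaTop S) U) \<and> betaS S \<subseteq> \<Union>\<U>"
  have "\<exists>UA. ultrafilter_on S p \<longrightarrow>
      fst UA \<in> \<U> \<and> p \<in> beta_hat S (snd UA) \<and> beta_hat S (snd UA) \<subseteq> fst UA" for p
  proof (cases "ultrafilter_on S p")
    case True
    then have "p \<in> betaS S" by simp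
    then obtain U where U: "U \<in> \<U>" "p \<in> U" using \<U> by blast
    then have "openin (betaTop S) U" using \<U> by blast
    then obtain A where "p \<in> beta_hat S A" "beta_hat S A \<subseteq> U"
      using openin_betaTop_imp_beta_hat[OF _ U(2)] by blast
    then show ?thesis using U(1) by (intro exI[of _ "(U, A)"]) simp
  qed simp
  then have "\<exists>g. \<forall>p. ultrafilter_on S p \<longrightarrow>
      fst (g p) \<in> \<U> \<and> p \<in> beta_hat S (snd (g p)) \<and> beta_hat S (snd (g p)) \<subseteq> fst (g p)"
    by (intro choice allI)
  then obtain g where g: "\<And>p. ultrafilter_on S p \<Longrightarrow>
      fst (g p) \<in> \<U> \<and> p \<in> beta_hat S (snd (g p)) \<and> beta_hat S (snd (g p)) \<subseteq> fst (g p)"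
    by blast
  define U A where "U = fst \<circ> g" and "A = snd \<circ> g"
  have UA: "\<And>p. ultrafilter_on S p \<Longrightarrow>
      U p \<in> \<U> \<and> p \<in> beta_hat S (A p) \<and> beta_hat S (A p) \<subseteq> U p"
    using g by (simp add: U_def A_def)
  have "A p \<in> p" if "ultrafilter_on S p" for p
    using UA[OF that] by (simp add: mem_beta_hat)
  then obtain P where P: "finite P" "P \<subseteq> betaS S" "betaS S \<subseteq> (\<Union>p\<in>P. beta_hat S (A p))"
    using betaS_finite_subcover[of S A] by blast
  have "finite (U ` P)" using P(1) by simp
  moreover have "U ` P \<subseteq> \<U>" using P(2) UA by auto
  moreover have "betaS S \<subseteq> \<Union>(U ` P)"
  proof
    fix x assume "x \<in> betaS S"
    then obtain p where "p \<in> P" "x \<in> beta_hat S (A p)" using P(3) by blast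
    moreover have "ultrafilter_on S p" using P(2) \<open>p \<in> P\<close> by auto
    ultimately show "x \<in> \<Union>(U ` P)" using UA by blast
  qed
  ultimately show "\<exists>\<F>. finite \<F> \<and> \<F> \<subseteq> \<U> \<and> betaS S \<subseteq> \<Union>\<F>" by blast
qed

section \<open>The semigroup \<open>(\<beta>S, +)\<close>\<close>

definition ltrans_in :: "real set \<Rightarrow> real set set \<Rightarrow> real set \<Rightarrow> real set" where
  "ltrans_in S q A = {x \<in> S. ltrans S x A \<in> q}"

lemma mem_bplus: "A \<in> bplus S p q \<longleftrightarrow> A \<subseteq> S \<and> ltrans_in S q A \<in> p"
  by (simp add: bplus_def ltrans_in_def)

lemma mem_ltrans: "y \<in> ltrans S x A \<longleftrightarrow> y \<in> S \<and> x + y \<in> A"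
  by (simp add: ltrans_def)

lemma ltrans_subset: "ltrans S x A \<subseteq> S"
  by (auto simp: ltrans_def)

lemma ltrans_in_subset: "ltrans_in S q A \<subseteq> S"
  by (auto simp: ltrans_in_def)

lemma ltrans_Int: "ltrans S x (A \<inter> B) = ltrans S x A \<inter> ltrans S x B"
  by (auto simp: ltrans_def)

lemma ltrans_in_Int:
  assumes q: "ultrafilter_on S q"
  shows "ltrans_in S q (A \<inter> B) = ltrans_in S q A \<inter> ltrans_in S q B"
  unfolding ltrans_in_def ltrans_Int
  using ultrafilter_on_Int[OF q] ultrafilter_on_mono[OF q _ _ ltrans_subset] by blast

lemma ultrafilter_on_pullback:
  assumes p: "ultrafilter_on S p" and sub: "\<And>A. \<phi> A \<subseteq> S" and top: "\<phi> S = S"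
    and Int: "\<And>A B. \<phi> (A \<inter> B) = \<phi> A \<inter> \<phi> B" and Diff: "\<And>A. \<phi> (S - A) = S - \<phi> A"
  shows "ultrafilter_on S {A. A \<subseteq> S \<and> \<phi> A \<in> p}"
proof -
  have empty: "\<phi> {} = {}" using Diff[of S] top by simp
  have mono: "\<phi> A \<subseteq> \<phi> B" if "A \<subseteq> B" for A B
    using Int[of A B] that by (simp add: Int_absorb2 le_iff_inf)
  show ?thesis
    unfolding ultrafilter_on_def filter_on_def
  proof (intro conjI ballI allI impI)
    show "S \<in> {A. A \<subseteq> S \<and> \<phi> A \<in> p}" using top ultrafilter_on_top[OF p] by simp
    show "{} \<notin> {A. A \<subseteq> S \<and> \<phi> A \<in> p}" using empty ultrafilter_on_empty[OF p] by simp
  next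
    fix A B assume "A \<in> {A. A \<subseteq> S \<and> \<phi> A \<in> p}" "B \<in> {A. A \<subseteq> S \<and> \<phi> A \<in> p}"
    then show "A \<inter> B \<in> {A. A \<subseteq> S \<and> \<phi> A \<in> p}"
      using Int ultrafilter_on_Int[OF p] by auto
  next
    fix A B assume "A \<in> {A. A \<subseteq> S \<and> \<phi> A \<in> p}" "A \<subseteq> B \<and> B \<subseteq> S"
    then show "B \<in> {A. A \<subseteq> S \<and> \<phi> A \<in> p}"
      using mono[of A B] ultrafilter_on_mono[OF p _ _ sub] by blast
  next
    fix A assume "A \<subseteq> S"
    show "A \<in> {A. A \<subseteq> S \<and> \<phi> A \<in> p} \<or> S - A \<in> {A. A \<subseteq> S \<and> \<phi> A \<in> p}"
      using Diff[of A] ultrafilter_on_Diff_iff[OF p sub[of A]] \<open>A \<subseteq> S\<close> by auto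
  qed blast
qed

locale real_add_subsemigroup =
  fixes S :: "real set"
  assumes add_mem: "x \<in> S \<Longrightarrow> y \<in> S \<Longrightarrow> x + y \<in> S"
begin

lemma ltrans_top: "x \<in> S \<Longrightarrow> ltrans S x S = S"
  using add_mem by (auto simp: ltrans_def)

lemma ltrans_Diff: "x \<in> S \<Longrightarrow> ltrans S x (S - A) = S - ltrans S x A"
  using add_mem by (auto simp: ltrans_def)

lemma ltrans_ltrans: "y \<in> S \<Longrightarrow> z \<in> S \<Longrightarrow> ltrans S z (ltrans S y A) = ltrans S (y + z) A"
  using add_mem by (auto simp: ltrans_def add.assoc)

lemma ltrans_in_ltrans:
  assumes "y \<in> S" shows "ltrans_in S r (ltrans S y A) = ltrans S y (ltrans_in S r A)"
  using ltrans_ltrans[OF assms] add_mem[OF assms] by (auto simp: ltrans_in_def mem_ltrans)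

lemma ltrans_in_Diff:
  assumes q: "ultrafilter_on S q" shows "ltrans_in S q (S - A) = S - ltrans_in S q A"
proof (rule set_eqI)
  fix x
  show "x \<in> ltrans_in S q (S - A) \<longleftrightarrow> x \<in> S - ltrans_in S q A"
  proof (cases "x \<in> S")
    case True
    then show ?thesis
      using ultrafilter_on_Diff_iff[OF q ltrans_subset, of x A]
      by (simp add: ltrans_in_def ltrans_Diff)
  qed (simp add: ltrans_in_def)
qed

lemma ltrans_in_top: "ultrafilter_on S q \<Longrightarrow> ltrans_in S q S = S"
  using ultrafilter_on_top ltrans_top by (auto simp: ltrans_in_def)

lemma ultrafilter_on_bplus:
  assumes p: "ultrafilter_on S p" and q: "ultrafilter_on S q"
  shows "ultrafilter_on S (bplus S p q)"
proof -
  have "ultrafilter_on S {A. A \<subseteq> S \<and> ltrans_in S q A \<in> p}"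
    using ultrafilter_on_pullback[OF p ltrans_in_subset ltrans_in_top[OF q]
        ltrans_in_Int[OF q] ltrans_in_Diff[OF q]] .
  moreover have "bplus S p q = {A. A \<subseteq> S \<and> ltrans_in S q A \<in> p}"
    by (auto simp: mem_bplus)
  ultimately show ?thesis by simp
qed

lemma bplus_assoc: "bplus S (bplus S p q) r = bplus S p (bplus S q r)"
proof -
  have "ltrans_in S (bplus S q r) A = ltrans_in S q (ltrans_in S r A)" for A
  proof -
    have "ltrans S y A \<in> bplus S q r \<longleftrightarrow> ltrans S y (ltrans_in S r A) \<in> q" if "y \<in> S" for y
      using ltrans_in_ltrans[OF that] by (simp add: mem_bplus ltrans_subset)
    then show ?thesis by (auto simp: ltrans_in_def)
  qed
  then show ?thesis using ltrans_in_subset by (auto simp: mem_bplus)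
qed

lemma continuous_map_bplus_right:
  assumes q: "ultrafilter_on S q"
  shows "continuous_map (betaTop S) (betaTop S) (\<lambda>p. bplus S p q)"
proof -
  have pre: "(\<lambda>p. bplus S p q) -` beta_hat S A \<inter> betaS S = beta_hat S (ltrans_in S q A)"
    if "A \<subseteq> S" for A
    using that ultrafilter_on_bplus[OF _ q] by (auto simp: mem_beta_hat mem_bplus)
  have "openin (betaTop S) ((\<lambda>p. bplus S p q) -` U \<inter> topspace (betaTop S))"
    if U: "U \<in> {{p \<in> betaS S. A \<in> p} | A. A \<subseteq> S}" for U
  proof -
    obtain A where "A \<subseteq> S" "U = beta_hat S A" using U by (auto simp: beta_hat_def)
    then show ?thesis using pre openin_beta_hat[OF ltrans_in_subset] by simp
  qed
  moreover have "(\<lambda>p. bplus S p q) ` topspace (betaTop S) \<subseteq> \<Union>{{p \<in> betaS S. A \<in> p} | A. A \<subseteq> S}"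
    using ultrafilter_on_bplus[OF _ q] topspace_betaTop[of S]
    unfolding betaTop_def topology_generated_by_topspace by auto
  ultimately show ?thesis
    unfolding betaTop_def[of S] by (intro continuous_on_generated_topo) (simp_all add: betaTop_def)
qed

end

section \<open>Minimal left ideals and the smallest ideal\<close>

definition left_ideal :: "real set \<Rightarrow> real set set set \<Rightarrow> real set set set \<Rightarrow> bool" where
  "left_ideal S T L \<longleftrightarrow> L \<noteq> {} \<and> L \<subseteq> T \<and> (\<forall>p\<in>T. \<forall>q\<in>L. bplus S p q \<in> L)"

definition minimal_left_ideal :: "real set \<Rightarrow> real set set set \<Rightarrow> real set set set \<Rightarrow> bool" where
  "minimal_left_ideal S T L \<longleftrightarrow>
     left_ideal S T L \<and> (\<forall>L'. left_ideal S T L' \<longrightarrow> L' \<subseteq> L \<longrightarrow> L' = L)"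

locale closed_beta_subsemigroup = real_add_subsemigroup +
  fixes T :: "real set set set"
  assumes closedin_T: "closedin (betaTop S) T"
    and T_nonempty: "T \<noteq> {}"
    and bplus_mem: "p \<in> T \<Longrightarrow> q \<in> T \<Longrightarrow> bplus S p q \<in> T"
begin

lemma T_ultrafilter: "p \<in> T \<Longrightarrow> ultrafilter_on S p"
  using closedin_subset[OF closedin_T] by auto

lemma left_ideal_image_bplus:
  assumes q: "q \<in> T" shows "left_ideal S T ((\<lambda>p. bplus S p q) ` T)"
  unfolding left_ideal_def
proof (intro conjI ballI)
  show "(\<lambda>p. bplus S p q) ` T \<noteq> {}" using T_nonempty by simp
  show "(\<lambda>p. bplus S p q) ` T \<subseteq> T" using bplus_mem q by blast
  fix p r assume "p \<in> T" "r \<in> (\<lambda>p. bplus S p q) ` T"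
  then obtain u where "u \<in> T" "r = bplus S u q" by blast
  then have "bplus S p r = bplus S (bplus S p u) q" by (simp add: bplus_assoc)
  then show "bplus S p r \<in> (\<lambda>p. bplus S p q) ` T"
    using bplus_mem[OF \<open>p \<in> T\<close> \<open>u \<in> T\<close>] by blast
qed

lemma compactin_image_bplus:
  "q \<in> T \<Longrightarrow> compactin (betaTop S) ((\<lambda>p. bplus S p q) ` T)"
  using image_compactin closedin_compact_space[OF compact_space_betaTop closedin_T]
    continuous_map_bplus_right[OF T_ultrafilter] by blast

lemma closedin_image_bplus:
  "q \<in> T \<Longrightarrow> closedin (betaTop S) ((\<lambda>p. bplus S p q) ` T)"
  using compactin_imp_closedin[OF Hausdorff_space_betaTop compactin_image_bplus] .

lemma closed_left_ideal_Inter_chain: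
  assumes "C \<noteq> {}" and C: "\<And>L. L \<in> C \<Longrightarrow> left_ideal S T L \<and> closedin (betaTop S) L"
    and chain: "\<And>L L'. L \<in> C \<Longrightarrow> L' \<in> C \<Longrightarrow> L \<subseteq> L' \<or> L' \<subseteq> L"
  shows "left_ideal S T (\<Inter>C) \<and> closedin (betaTop S) (\<Inter>C)"
proof -
  have "\<forall>F. finite F \<and> F \<subseteq> C \<longrightarrow> \<Inter>F \<noteq> {}"
  proof (intro allI impI)
    fix F assume F: "finite F \<and> F \<subseteq> C"
    show "\<Inter>F \<noteq> {}"
    proof (cases "F = {}")
      case False
      have "subset.chain C F" using F chain by (auto simp: subset_chain_def)
      then have "\<Inter>F \<in> F" using Inter_in_chain F False by blast
      then show ?thesis using F C unfolding left_ideal_def by blast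
    qed simp
  qed
  moreover have "\<forall>L\<in>C. closedin (betaTop S) L" using C by blast
  ultimately have "\<Inter>C \<noteq> {}"
    using compact_space_fip[THEN iffD1, OF compact_space_betaTop, rule_format, of C] by blast
  moreover obtain L where "L \<in> C" using \<open>C \<noteq> {}\<close> by blast
  then have "\<Inter>C \<subseteq> T" using C unfolding left_ideal_def by blast
  moreover have "bplus S p q \<in> \<Inter>C" if "p \<in> T" "q \<in> \<Inter>C" for p q
    using that C unfolding left_ideal_def by blast
  moreover have "closedin (betaTop S) (\<Inter>C)"
    using C \<open>C \<noteq> {}\<close> by (intro closedin_Inter) blast+
  ultimately show ?thesis unfolding left_ideal_def by blast
qed

lemma minimal_closed_left_ideal_exists:
  "\<exists>L. left_ideal S T L \<and> closedin (betaTop S) L \<and>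
     (\<forall>L'. left_ideal S T L' \<and> closedin (betaTop S) L' \<and> L' \<subseteq> L \<longrightarrow> L' = L)"
proof -
  define \<A> where "\<A> = {L. left_ideal S T L \<and> closedin (betaTop S) L}"
  have po: "partial_order_on \<A> (relation_of (\<lambda>L L'. L' \<subseteq> L) \<A>)"
    by (rule partial_order_on_relation_ofI) auto
  \<comment> \<open>Zorn for reverse inclusion; compactness makes intersections of chains nonempty.\<close>
  have "\<exists>L\<in>\<A>. \<forall>L'\<in>\<A>. L' \<subseteq> L \<longrightarrow> L' = L"
  proof (rule predicate_Zorn[OF po])
    fix C assume C: "C \<in> Chains (relation_of (\<lambda>L L'. L' \<subseteq> L) \<A>)"
    then have CA: "C \<subseteq> \<A>" by (rule Chains_relation_of)
    have chain: "L \<subseteq> L' \<or> L' \<subseteq> L" if "L \<in> C" "L' \<in> C" for L L'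
      using C that unfolding Chains_def relation_of_def by blast
    show "\<exists>U\<in>\<A>. \<forall>L\<in>C. U \<subseteq> L"
    proof (cases "C = {}")
      case True
      have "left_ideal S T T" using T_nonempty bplus_mem by (auto simp: left_ideal_def)
      then have "T \<in> \<A>" using closedin_T by (simp add: \<A>_def)
      then show ?thesis using True by blast
    next
      case False
      have "\<Inter>C \<in> \<A>"
        using closed_left_ideal_Inter_chain[OF False _ chain] CA by (simp add: \<A>_def subset_iff)
      then show ?thesis by blast
    qed
  qed
  then show ?thesis by (auto simp: \<A>_def)
qed

lemma minimal_left_ideal_exists: "\<exists>L. minimal_left_ideal S T L"
proof -
  obtain L where L: "left_ideal S T L" "closedin (betaTop S) L"
    and min: "\<And>L'. left_ideal S T L' \<Longrightarrow> closedin (betaTop S) L' \<Longrightarrow> L' \<subseteq> L \<Longrightarrow> L' = L"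
    using minimal_closed_left_ideal_exists by blast
  have "L' = L" if L': "left_ideal S T L'" "L' \<subseteq> L" for L'
  proof -
    obtain q where "q \<in> L'" using L'(1) by (auto simp: left_ideal_def)
    then have "q \<in> T" using L'(1) by (auto simp: left_ideal_def)
    have sub: "(\<lambda>p. bplus S p q) ` T \<subseteq> L'" using L'(1) \<open>q \<in> L'\<close> by (auto simp: left_ideal_def)
    have "(\<lambda>p. bplus S p q) ` T = L"
      using min[OF left_ideal_image_bplus[OF \<open>q \<in> T\<close>] closedin_image_bplus[OF \<open>q \<in> T\<close>]]
        sub L'(2) by blast
    then show ?thesis using sub L'(2) by blast
  qed
  then show ?thesis using L(1) by (auto simp: minimal_left_ideal_def)
qed

lemma minimal_left_ideal_eq_image:
  assumes L: "minimal_left_ideal S T L" and q: "q \<in> L"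
  shows "(\<lambda>p. bplus S p q) ` T = L"
proof -
  have "q \<in> T" using L q by (auto simp: minimal_left_ideal_def left_ideal_def)
  moreover have "(\<lambda>p. bplus S p q) ` T \<subseteq> L"
    using L q by (auto simp: minimal_left_ideal_def left_ideal_def)
  ultimately show ?thesis
    using L left_ideal_image_bplus by (auto simp: minimal_left_ideal_def)
qed

lemma compactin_minimal_left_ideal:
  assumes L: "minimal_left_ideal S T L" shows "compactin (betaTop S) L"
proof -
  obtain q where "q \<in> L" using L by (auto simp: minimal_left_ideal_def left_ideal_def)
  moreover have "q \<in> T" using L \<open>q \<in> L\<close> by (auto simp: minimal_left_ideal_def left_ideal_def)
  ultimately show ?thesis
    using compactin_image_bplus minimal_left_ideal_eq_image[OF L] by metis
qed

lemma minimal_left_ideal_image_bplus: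
  assumes L: "minimal_left_ideal S T L" and t: "t \<in> T"
  shows "minimal_left_ideal S T ((\<lambda>p. bplus S p t) ` L)"
proof -
  have LT: "L \<subseteq> T" and LI: "left_ideal S T L"
    using L by (auto simp: minimal_left_ideal_def left_ideal_def)
  have "left_ideal S T ((\<lambda>p. bplus S p t) ` L)"
    unfolding left_ideal_def
  proof (intro conjI ballI)
    show "(\<lambda>p. bplus S p t) ` L \<noteq> {}" using LI by (auto simp: left_ideal_def)
    show "(\<lambda>p. bplus S p t) ` L \<subseteq> T" using LT bplus_mem t by blast
    fix r q assume "r \<in> T" "q \<in> (\<lambda>p. bplus S p t) ` L"
    then obtain l where "l \<in> L" "q = bplus S l t" by blast
    then have "bplus S r q = bplus S (bplus S r l) t" by (simp add: bplus_assoc)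
    moreover have "bplus S r l \<in> L" using LI \<open>r \<in> T\<close> \<open>l \<in> L\<close> by (auto simp: left_ideal_def)
    ultimately show "bplus S r q \<in> (\<lambda>p. bplus S p t) ` L" by blast
  qed
  moreover have "J = (\<lambda>p. bplus S p t) ` L"
    if J: "left_ideal S T J" "J \<subseteq> (\<lambda>p. bplus S p t) ` L" for J
  proof -
    define M where "M = {l \<in> L. bplus S l t \<in> J}"
    have "left_ideal S T M"
      unfolding left_ideal_def
    proof (intro conjI ballI)
      show "M \<noteq> {}" using J by (auto simp: left_ideal_def M_def)
      show "M \<subseteq> T" using LT by (auto simp: M_def)
      fix r l assume "r \<in> T" "l \<in> M"
      then have "bplus S r l \<in> L" "bplus S r (bplus S l t) \<in> J"
        using LI J(1) by (auto simp: left_ideal_def M_def)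
      then show "bplus S r l \<in> M" by (simp add: M_def bplus_assoc)
    qed
    then have "M = L" using L by (auto simp: minimal_left_ideal_def M_def)
    then show ?thesis using J(2) by (auto simp: M_def)
  qed
  ultimately show ?thesis by (auto simp: minimal_left_ideal_def)
qed

lemma minimal_left_ideal_subset_ideal:
  assumes L: "minimal_left_ideal S T L" and I: "two_sided_ideal S T I"
  shows "L \<subseteq> I"
proof -
  obtain q l where "q \<in> I" "l \<in> L" using I L
    by (auto simp: two_sided_ideal_def minimal_left_ideal_def left_ideal_def)
  then have "q \<in> T" "l \<in> T" using I L
    by (auto simp: two_sided_ideal_def minimal_left_ideal_def left_ideal_def)
  then have "bplus S q l \<in> I" "bplus S q l \<in> L"
    using I L \<open>q \<in> I\<close> \<open>l \<in> L\<close>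
    by (auto simp: two_sided_ideal_def minimal_left_ideal_def left_ideal_def)
  have "(\<lambda>p. bplus S p (bplus S q l)) ` T \<subseteq> I"
    using I \<open>bplus S q l \<in> I\<close> by (auto simp: two_sided_ideal_def)
  moreover have "(\<lambda>p. bplus S p (bplus S q l)) ` T = L"
    by (rule minimal_left_ideal_eq_image[OF L \<open>bplus S q l \<in> L\<close>])
  ultimately show ?thesis by simp
qed

lemma two_sided_ideal_Inter:
  "two_sided_ideal S T (\<Inter>{I. two_sided_ideal S T I})"
  unfolding two_sided_ideal_def[of S T "\<Inter>_"]
proof (intro conjI ballI)
  obtain L where L: "minimal_left_ideal S T L" using minimal_left_ideal_exists by blast
  then have "L \<subseteq> \<Inter>{I. two_sided_ideal S T I}"
    using minimal_left_ideal_subset_ideal by blast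
  moreover have "L \<noteq> {}" using L by (auto simp: minimal_left_ideal_def left_ideal_def)
  ultimately show "\<Inter>{I. two_sided_ideal S T I} \<noteq> {}" by blast
  have "two_sided_ideal S T T" using T_nonempty bplus_mem by (auto simp: two_sided_ideal_def)
  then show "\<Inter>{I. two_sided_ideal S T I} \<subseteq> T" by blast
next
  fix p q assume "p \<in> T" "q \<in> \<Inter>{I. two_sided_ideal S T I}"
  then show "bplus S p q \<in> \<Inter>{I. two_sided_ideal S T I}"
    "bplus S q p \<in> \<Inter>{I. two_sided_ideal S T I}"
    by (auto simp: two_sided_ideal_def)
qed

lemma Kmin_eq_Inter: "Kmin S T = \<Inter>{I. two_sided_ideal S T I}"
  unfolding Kmin_def
proof (rule the_equality)
  fix I assume I: "two_sided_ideal S T I \<and> (\<forall>J. two_sided_ideal S T J \<longrightarrow> I \<subseteq> J)"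
  then have "I \<subseteq> \<Inter>{I. two_sided_ideal S T I}" using two_sided_ideal_Inter by blast
  moreover have "\<Inter>{I. two_sided_ideal S T I} \<subseteq> I" using I by blast
  ultimately show "I = \<Inter>{I. two_sided_ideal S T I}" by (rule antisym)
qed (use two_sided_ideal_Inter in blast)

lemma two_sided_ideal_Kmin: "two_sided_ideal S T (Kmin S T)"
  by (simp add: Kmin_eq_Inter two_sided_ideal_Inter)

lemma Kmin_subset_ideal: "two_sided_ideal S T I \<Longrightarrow> Kmin S T \<subseteq> I"
  by (auto simp: Kmin_eq_Inter)

lemma Kmin_nonempty: "Kmin S T \<noteq> {}"
  using two_sided_ideal_Kmin by (simp add: two_sided_ideal_def)

lemma Kmin_subset: "Kmin S T \<subseteq> T"
  using two_sided_ideal_Kmin by (simp add: two_sided_ideal_def)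

lemma mem_Kmin_imp_minimal_left_ideal:
  assumes p: "p \<in> Kmin S T"
  shows "\<exists>L. minimal_left_ideal S T L \<and> p \<in> L"
proof -
  obtain L where L: "minimal_left_ideal S T L" using minimal_left_ideal_exists by blast
  have LT: "L \<subseteq> T" and LI: "left_ideal S T L"
    using L by (auto simp: minimal_left_ideal_def left_ideal_def)
  define I where "I = {bplus S l t | l t. l \<in> L \<and> t \<in> T}"
  have "two_sided_ideal S T I"
    unfolding two_sided_ideal_def
  proof (intro conjI ballI)
    show "I \<noteq> {}" using LI T_nonempty by (auto simp: I_def left_ideal_def)
    show "I \<subseteq> T" using LT bplus_mem by (auto simp: I_def)
    fix r q assume "r \<in> T" "q \<in> I"
    then obtain l t where lt: "l \<in> L" "t \<in> T" "q = bplus S l t" by (auto simp: I_def)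
    have "bplus S r q = bplus S (bplus S r l) t" using lt by (simp add: bplus_assoc)
    moreover have "bplus S r l \<in> L" using LI \<open>r \<in> T\<close> lt by (auto simp: left_ideal_def)
    moreover have "bplus S q r = bplus S l (bplus S t r)" using lt by (simp add: bplus_assoc)
    moreover have "bplus S t r \<in> T" using bplus_mem lt \<open>r \<in> T\<close> by blast
    ultimately show "bplus S r q \<in> I" "bplus S q r \<in> I" using lt by (auto simp: I_def)
  qed
  then have "p \<in> I" using Kmin_subset_ideal p by blast
  then obtain l t where "l \<in> L" "t \<in> T" "p = bplus S l t" by (auto simp: I_def)
  then show ?thesis using minimal_left_ideal_image_bplus[OF L \<open>t \<in> T\<close>] by blast
qed

lemma bplus_closure_Kmin:
  assumes p: "p \<in> betaTop S closure_of Kmin S T" and q: "q \<in> betaTop S closure_of Kmin S T"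
  shows "bplus S p q \<in> betaTop S closure_of Kmin S T"
proof -
  have "betaTop S closure_of Kmin S T \<subseteq> T"
    using closure_of_mono[OF Kmin_subset] closure_of_closedin[OF closedin_T] by blast
  then have "q \<in> T" using q by blast
  have "(\<lambda>r. bplus S r q) ` Kmin S T \<subseteq> Kmin S T"
    using two_sided_ideal_Kmin \<open>q \<in> T\<close> by (auto simp: two_sided_ideal_def)
  then have "(\<lambda>r. bplus S r q) ` (betaTop S closure_of Kmin S T) \<subseteq> betaTop S closure_of Kmin S T"
    using continuous_map_image_closure_subset[OF continuous_map_bplus_right[OF T_ultrafilter[OF \<open>q \<in> T\<close>]]]
      closure_of_mono by blast
  then show ?thesis using p by blast
qed

end

section \<open>Ultrafilters converging to \<open>0\<^sup>+\<close>\<close>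

lemma mem_Oplus: "p \<in> Oplus S \<longleftrightarrow> ultrafilter_on S p \<and> (\<forall>e>0. S \<inter> {0<..<e} \<in> p)"
  by (simp add: Oplus_def)

lemma closedin_Oplus: "closedin (betaTop S) (Oplus S)"
proof -
  have "Oplus S = \<Inter>((\<lambda>e. beta_hat S (S \<inter> {0<..<e})) ` {0<..})"
  proof (rule set_eqI)
    fix p
    have "p \<in> \<Inter>((\<lambda>e. beta_hat S (S \<inter> {0<..<e})) ` {0<..})
        \<longleftrightarrow> (\<forall>e>0. ultrafilter_on S p \<and> S \<inter> {0<..<e} \<in> p)"
      by (auto simp: mem_beta_hat)
    also have "\<dots> \<longleftrightarrow> p \<in> Oplus S"
    proof
      assume H: "\<forall>e>0. ultrafilter_on S p \<and> S \<inter> {0<..<e} \<in> p"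
      then show "p \<in> Oplus S" using H[rule_format, OF zero_less_one] by (simp add: mem_Oplus)
    qed (simp add: mem_Oplus)
    finally show "p \<in> Oplus S \<longleftrightarrow> p \<in> \<Inter>((\<lambda>e. beta_hat S (S \<inter> {0<..<e})) ` {0<..})" ..
  qed
  moreover have "closedin (betaTop S) (beta_hat S (S \<inter> {0<..<e}))" for e :: real
    by (rule closedin_beta_hat) blast
  ultimately show ?thesis by (auto intro: closedin_Inter)
qed

lemma finite_subsets_common_bound:
  fixes J :: "('a set \<times> real) set"
  assumes "finite J" and "\<And>G \<mu>. (G, \<mu>) \<in> J \<Longrightarrow> finite G \<and> G \<subseteq> X \<and> 0 < \<mu>"
  shows "\<exists>G \<mu>. finite G \<and> G \<subseteq> X \<and> 0 < \<mu> \<and> (\<forall>(G', \<mu>')\<in>J. G' \<subseteq> G \<and> \<mu> \<le> \<mu>')"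
  using assms
proof (induction J rule: finite_induct)
  case empty
  show ?case by (intro exI[of _ "{}"] exI[of _ "1::real"]) simp
next
  case (insert j J)
  have "\<exists>G \<mu>. finite G \<and> G \<subseteq> X \<and> 0 < \<mu> \<and> (\<forall>(G', \<mu>')\<in>J. G' \<subseteq> G \<and> \<mu> \<le> \<mu>')"
    using insert.prems by (intro insert.IH) auto
  then obtain G \<mu> where "finite G" "G \<subseteq> X" "0 < \<mu>" "\<forall>(G', \<mu>')\<in>J. G' \<subseteq> G \<and> \<mu> \<le> \<mu>'"
    by blast
  moreover obtain G' \<mu>' where j: "j = (G', \<mu>')" by fastforce
  moreover have "finite G'" "G' \<subseteq> X" "0 < \<mu>'" using insert.prems j by auto
  ultimately show ?case
    by (intro exI[of _ "G \<union> G'"] exI[of _ "min \<mu> \<mu>'"]) auto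
qed

locale dense_pos_subsemigroup = real_add_subsemigroup +
  assumes pos_mem: "x \<in> S \<Longrightarrow> 0 < x"
    and dense: "0 < a \<Longrightarrow> a < b \<Longrightarrow> \<exists>s\<in>S. a < s \<and> s < b"
begin

lemma exists_Oplus_mem:
  assumes "A \<subseteq> S" and small: "\<And>e. 0 < e \<Longrightarrow> \<exists>a\<in>A. a < e"
  shows "\<exists>u\<in>Oplus S. A \<in> u"
proof -
  have dir: "\<exists>i\<in>{0<..}. \<forall>j\<in>J. A \<inter> {..<i} \<subseteq> A \<inter> {..<j}"
    if "finite J" "J \<subseteq> {0::real<..}" for J
  proof -
    have "Min (insert 1 J) \<in> insert 1 J" using that by (intro Min_in) auto
    then have "0 < Min (insert 1 J)" using that by auto
    moreover have "Min (insert 1 J) \<le> j" if "j \<in> J" for j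
      using \<open>finite J\<close> that by simp
    ultimately show ?thesis
      by (intro bexI[of _ "Min (insert 1 J)"]) (auto simp: subset_iff intro: less_le_trans)
  qed
  have ne: "A \<inter> {..<e} \<noteq> {}" if e: "e \<in> {0<..}" for e
  proof -
    obtain a where "a \<in> A" "a < e" using small e by auto
    then show ?thesis by blast
  qed
  have "\<exists>u. ultrafilter_on S u \<and> (\<forall>e\<in>{0<..}. A \<inter> {..<e} \<in> u)"
  proof (rule ultrafilter_extends_directed)
    show "A \<inter> {..<e} \<subseteq> S" for e using \<open>A \<subseteq> S\<close> by blast
  qed (fact ne, fact dir)
  then obtain u where u: "ultrafilter_on S u" "\<forall>e\<in>{0<..}. A \<inter> {..<e} \<in> u" by blast
  have "S \<inter> {0<..<e} \<in> u" if e: "e > 0" for e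
  proof (rule ultrafilter_on_mono[OF u(1)])
    show "A \<inter> {..<e} \<in> u" using u(2) e by simp
    show "A \<inter> {..<e} \<subseteq> S \<inter> {0<..<e}" using \<open>A \<subseteq> S\<close> pos_mem by auto
  qed blast
  moreover have "A \<in> u"
  proof (rule ultrafilter_on_mono[OF u(1)])
    show "A \<inter> {..<1} \<in> u" using u(2) by simp
  qed (use \<open>A \<subseteq> S\<close> in auto)
  ultimately show ?thesis using u(1) by (auto simp: mem_Oplus)
qed

lemma Oplus_nonempty: "Oplus S \<noteq> {}"
proof -
  have "\<exists>s\<in>S. s < e" if "0 < e" for e
    using dense[of "e / 2" e] that by auto
  then show ?thesis using exists_Oplus_mem[of S] by blast
qed

lemma Oplus_eventually:
  assumes D: "\<And>v. v \<in> Oplus S \<Longrightarrow> D \<in> v"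
  shows "\<exists>d>0. S \<inter> {0<..<d} \<subseteq> D"
proof (rule ccontr)
  assume "\<not> ?thesis"
  then have "\<exists>a\<in>S - D. a < e" if "0 < e" for e
    using that pos_mem by fastforce
  then obtain v where "v \<in> Oplus S" "S - D \<in> v"
    using exists_Oplus_mem[of "S - D"] by blast
  moreover have "D \<in> v" using D \<open>v \<in> Oplus S\<close> by blast
  moreover have v: "ultrafilter_on S v" using \<open>v \<in> Oplus S\<close> by (simp add: mem_Oplus)
  ultimately have "D \<inter> (S - D) \<in> v" using ultrafilter_on_Int by blast
  then show False using ultrafilter_on_empty[OF v] by simp
qed

lemma bplus_Oplus:
  assumes p: "p \<in> Oplus S" and q: "q \<in> Oplus S"
  shows "bplus S p q \<in> Oplus S"
proof -
  have up: "ultrafilter_on S p" and uq: "ultrafilter_on S q"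
    using p q by (auto simp: mem_Oplus)
  have "S \<inter> {0<..<e} \<in> bplus S p q" if "0 < e" for e
  proof -
    have half: "S \<inter> {0<..<e / 2} \<in> r" if "r \<in> Oplus S" for r
      using that \<open>0 < e\<close> by (simp add: mem_Oplus)
    have "ltrans S x (S \<inter> {0<..<e}) \<in> q" if x: "x \<in> S \<inter> {0<..<e / 2}" for x
    proof (rule ultrafilter_on_mono[OF uq half[OF q]])
      show "S \<inter> {0<..<e / 2} \<subseteq> ltrans S x (S \<inter> {0<..<e})"
        using x pos_mem add_mem by (auto simp: mem_ltrans)
    qed (rule ltrans_subset)
    then have "S \<inter> {0<..<e / 2} \<subseteq> ltrans_in S q (S \<inter> {0<..<e})"
      by (auto simp: ltrans_in_def)
    then have "ltrans_in S q (S \<inter> {0<..<e}) \<in> p"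
      using ultrafilter_on_mono[OF up half[OF p] _ ltrans_in_subset] by blast
    then show ?thesis by (simp add: mem_bplus)
  qed
  then show ?thesis using ultrafilter_on_bplus[OF up uq] by (simp add: mem_Oplus)
qed

sublocale Oplus: closed_beta_subsemigroup S "Oplus S"
  using closedin_Oplus Oplus_nonempty bplus_Oplus by unfold_locales


section \<open>Piecewise syndeticity near zero\<close>

lemma translate_subset_iff:
  "G \<subseteq> S \<Longrightarrow> (\<lambda>g. g + x) ` (G \<inter> {0<..<d}) \<subseteq> C \<longleftrightarrow> (\<forall>g\<in>G. g < d \<longrightarrow> g + x \<in> C)"
  using pos_mem by (auto simp: image_subset_iff subset_iff)

lemma S_nonempty: "S \<noteq> {}"
  using dense[of 1 2] by auto

lemma exists_Oplus_witness:
  assumes R: "\<And>G \<mu>. finite G \<Longrightarrow> G \<noteq> {} \<Longrightarrow> G \<subseteq> S \<Longrightarrow> 0 < \<mu> \<Longrightarrow>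
      \<exists>x\<in>S. x < \<mu> \<and> (\<forall>g\<in>G. R g x)"
  shows "\<exists>q\<in>Oplus S. \<forall>g\<in>S. {x \<in> S. R g x} \<in> q"
proof -
  \<comment> \<open>The witness sets shrink as \<open>G\<close> grows and \<open>\<mu>\<close> decreases, so they form a directed family.\<close>
  define I where "I = {(G, \<mu>). finite G \<and> G \<noteq> {} \<and> G \<subseteq> S \<and> (0::real) < \<mu>}"
  define Y where "Y i = {x \<in> S. x < snd i \<and> (\<forall>g\<in>fst i. R g x)}" for i
  obtain s where "s \<in> S" using S_nonempty by blast
  have dir: "\<exists>i\<in>I. \<forall>j\<in>J. Y i \<subseteq> Y j" if J: "finite J" "J \<subseteq> I" for J
  proof -
    have "\<exists>G \<mu>. finite G \<and> G \<subseteq> S \<and> 0 < \<mu> \<and> (\<forall>(G', \<mu>')\<in>J. G' \<subseteq> G \<and> \<mu> \<le> \<mu>')"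
      using J(2) by (intro finite_subsets_common_bound[OF J(1)]) (auto simp: I_def)
    then obtain G \<mu> where G: "finite G" "G \<subseteq> S" "0 < \<mu>"
      and bound: "\<forall>(G', \<mu>')\<in>J. G' \<subseteq> G \<and> \<mu> \<le> \<mu>'" by blast
    have "(insert s G, \<mu>) \<in> I" using G \<open>s \<in> S\<close> by (simp add: I_def)
    moreover have "Y (insert s G, \<mu>) \<subseteq> Y j" if "j \<in> J" for j
      using bound that by (cases j) (fastforce simp: Y_def)
    ultimately show ?thesis by blast
  qed
  have ne: "Y i \<noteq> {}" if i: "i \<in> I" for i
  proof -
    obtain G \<mu> where "i = (G, \<mu>)" by fastforce
    then have "finite G" "G \<noteq> {}" "G \<subseteq> S" "0 < \<mu>" using i by (auto simp: I_def)
    then obtain x where "x \<in> S" "x < snd i" "\<forall>g\<in>fst i. R g x"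
      using R[of G \<mu>] \<open>i = (G, \<mu>)\<close> by auto
    then show ?thesis by (auto simp: Y_def)
  qed
  have "\<exists>q. ultrafilter_on S q \<and> (\<forall>i\<in>I. Y i \<in> q)"
  proof (rule ultrafilter_extends_directed)
    show "Y i \<subseteq> S" for i by (auto simp: Y_def)
  qed (fact ne, fact dir)
  then obtain q where q: "ultrafilter_on S q" "\<And>i. i \<in> I \<Longrightarrow> Y i \<in> q" by blast
  have "S \<inter> {0<..<e} \<in> q" if e: "0 < e" for e
  proof (rule ultrafilter_on_mono[OF q(1) q(2)[of "({s}, e)"]])
    show "({s}, e) \<in> I" using \<open>s \<in> S\<close> e by (simp add: I_def)
    show "Y ({s}, e) \<subseteq> S \<inter> {0<..<e}" using pos_mem by (auto simp: Y_def)
  qed blast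
  then have "q \<in> Oplus S" using q(1) by (simp add: mem_Oplus)
  moreover have "\<forall>g\<in>S. {x \<in> S. R g x} \<in> q"
  proof
    fix g assume g: "g \<in> S"
    show "{x \<in> S. R g x} \<in> q"
    proof (rule ultrafilter_on_mono[OF q(1) q(2)[of "({g}, 1)"]])
      show "({g}, 1) \<in> I" using g by (simp add: I_def)
      show "Y ({g}, 1) \<subseteq> {x \<in> S. R g x}" by (auto simp: Y_def)
      show "{x \<in> S. R g x} \<subseteq> S" by (rule Collect_restrict)
    qed
  qed
  ultimately show ?thesis ..
qed

lemma exists_Oplus_right_translate:
  assumes R: "\<And>G \<mu>. finite G \<Longrightarrow> G \<noteq> {} \<Longrightarrow> G \<subseteq> S \<Longrightarrow> 0 < \<mu> \<Longrightarrow>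
      \<exists>x\<in>S. x < \<mu> \<and> (\<forall>g\<in>G. \<forall>n\<ge>1. g < \<delta> n \<longrightarrow> g + x \<in> C n)"
    and \<delta>: "\<And>n. n \<ge> 1 \<Longrightarrow> 0 < \<delta> n" and C: "\<And>n. C n \<subseteq> S"
  shows "\<exists>q\<in>Oplus S. \<forall>v\<in>Oplus S. \<forall>n\<ge>1. C n \<in> bplus S v q"
proof -
  have "\<exists>q\<in>Oplus S. \<forall>g\<in>S. {x \<in> S. \<forall>n\<ge>1. g < \<delta> n \<longrightarrow> g + x \<in> C n} \<in> q"
    using R by (rule exists_Oplus_witness)
  then obtain q where q: "q \<in> Oplus S"
    and Rq: "\<And>g. g \<in> S \<Longrightarrow> {x \<in> S. \<forall>n\<ge>1. g < \<delta> n \<longrightarrow> g + x \<in> C n} \<in> q"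
    by blast
  have uq: "ultrafilter_on S q" using q by (simp add: mem_Oplus)
  have "C n \<in> bplus S v q" if v: "v \<in> Oplus S" and n: "n \<ge> 1" for v n
  proof -
    have "ltrans S g (C n) \<in> q" if g: "g \<in> S \<inter> {0<..<\<delta> n}" for g
    proof (rule ultrafilter_on_mono[OF uq Rq])
      show "{x \<in> S. \<forall>n\<ge>1. g < \<delta> n \<longrightarrow> g + x \<in> C n} \<subseteq> ltrans S g (C n)"
        using g n by (auto simp: mem_ltrans)
    qed (use g ltrans_subset in auto)
    then have "S \<inter> {0<..<\<delta> n} \<subseteq> ltrans_in S q (C n)" by (auto simp: ltrans_in_def)
    moreover have "S \<inter> {0<..<\<delta> n} \<in> v" using v \<delta>[OF n] by (simp add: mem_Oplus)
    ultimately have "ltrans_in S q (C n) \<in> v"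
      using v ultrafilter_on_mono[of S v, OF _ _ _ ltrans_in_subset] by (auto simp: mem_Oplus)
    then show ?thesis using C by (simp add: mem_bplus)
  qed
  then show ?thesis using q by blast
qed

lemma exists_Oplus_bplus_mem:
  assumes "A \<subseteq> S" and w: "ultrafilter_on S w" and "E \<subseteq> S"
    and small: "\<And>e. 0 < e \<Longrightarrow> \<exists>t\<in>E. t < e" and E: "\<And>t. t \<in> E \<Longrightarrow> ltrans S t A \<in> w"
  shows "\<exists>u\<in>Oplus S. A \<in> bplus S u w"
proof -
  obtain u where u: "u \<in> Oplus S" "E \<in> u" using exists_Oplus_mem[OF \<open>E \<subseteq> S\<close> small] by blast
  have "E \<subseteq> ltrans_in S w A" using E \<open>E \<subseteq> S\<close> by (auto simp: ltrans_in_def)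
  then have "ltrans_in S w A \<in> u"
    using u ultrafilter_on_mono[of S u, OF _ _ _ ltrans_in_subset] by (auto simp: mem_Oplus)
  then show ?thesis using u(1) \<open>A \<subseteq> S\<close> by (auto simp: mem_bplus)
qed

lemma Kmin_mem_if_translates:
  assumes "A \<subseteq> S" and w: "w \<in> Kmin S (Oplus S)"
    and F: "\<And>n. n \<ge> 1 \<Longrightarrow> finite (F n) \<and> F n \<subseteq> S \<inter> {0<..<1 / real n}"
    and Fw: "\<And>n. n \<ge> 1 \<Longrightarrow> (\<Union>t\<in>F n. ltrans S t A) \<in> w"
  shows "\<exists>p\<in>Kmin S (Oplus S). A \<in> p"
proof -
  have uw: "ultrafilter_on S w" using w Oplus.Kmin_subset by (auto simp: mem_Oplus)
  have "\<forall>n. \<exists>t. n \<ge> 1 \<longrightarrow> t \<in> F n \<and> ltrans S t A \<in> w"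
    using ultrafilter_on_UN[OF uw] F Fw by blast
  then obtain t where t: "\<And>n. n \<ge> 1 \<Longrightarrow> t n \<in> F n \<and> ltrans S (t n) A \<in> w"
    by (metis choice)
  have small: "\<exists>s\<in>t ` {1..}. s < e" if e: "0 < e" for e
  proof -
    obtain n where n: "inverse (real (Suc n)) < e" using reals_Archimedean[OF e] by blast
    have "t (Suc n) < 1 / real (Suc n)" using t[of "Suc n"] F[of "Suc n"] by auto
    then have "t (Suc n) < e" using n by (simp add: inverse_eq_divide)
    moreover have "t (Suc n) \<in> t ` {1..}" by simp
    ultimately show ?thesis by blast
  qed
  have "t ` {1..} \<subseteq> S" using t F by auto
  then obtain u where "u \<in> Oplus S" "A \<in> bplus S u w"
    using exists_Oplus_bplus_mem[OF \<open>A \<subseteq> S\<close> uw _ small] t by auto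
  moreover have "bplus S u w \<in> Kmin S (Oplus S)"
    using Oplus.two_sided_ideal_Kmin \<open>u \<in> Oplus S\<close> w by (simp add: two_sided_ideal_def)
  ultimately show ?thesis by (intro bexI)
qed

lemma pw_syndetic_near_zero_imp_Kmin:
  assumes "A \<subseteq> S" and "pw_syndetic_near_zero S A"
  shows "\<exists>p\<in>Kmin S (Oplus S). A \<in> p"
proof -
  obtain F \<delta> where F: "\<forall>n\<ge>1. finite (F n) \<and> F n \<noteq> {} \<and>
        F n \<subseteq> {0<..<1 / real n} \<inter> S \<and> 0 < \<delta> n \<and> \<delta> n < 1 / real n"
    and G: "\<forall>G. finite G \<and> G \<noteq> {} \<and> G \<subseteq> S \<longrightarrow> (\<forall>\<mu>>0. \<exists>x\<in>S. 0 < x \<and> x < \<mu> \<and>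
        (\<forall>n\<ge>1. (\<lambda>g. g + x) ` (G \<inter> {0<..<\<delta> n}) \<subseteq> (\<Union>t\<in>F n. ltrans S t A)))"
    using assms(2) unfolding pw_syndetic_near_zero_def by (elim exE conjE) (rule that)
  define C where "C n = (\<Union>t\<in>F n. ltrans S t A)" for n
  have "\<exists>x\<in>S. x < \<mu> \<and> (\<forall>g\<in>G. \<forall>n\<ge>1. g < \<delta> n \<longrightarrow> g + x \<in> C n)"
    if "finite G" "G \<noteq> {}" "G \<subseteq> S" "0 < \<mu>" for G \<mu>
    using G[rule_format, of G \<mu>] that translate_subset_iff[OF \<open>G \<subseteq> S\<close>] by (auto simp: C_def)
  moreover have "C n \<subseteq> S" for n using ltrans_subset by (auto simp: C_def)
  ultimately obtain q where "q \<in> Oplus S" and q: "\<And>v n. v \<in> Oplus S \<Longrightarrow> n \<ge> 1 \<Longrightarrow> C n \<in> bplus S v q"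
    using exists_Oplus_right_translate[of \<delta> C] F by auto
  obtain r where r: "r \<in> Kmin S (Oplus S)" using Oplus.Kmin_nonempty by blast
  then have "r \<in> Oplus S" using Oplus.Kmin_subset by blast
  have "bplus S r q \<in> Kmin S (Oplus S)"
    using Oplus.two_sided_ideal_Kmin \<open>q \<in> Oplus S\<close> r by (simp add: two_sided_ideal_def)
  then show ?thesis
  proof (rule Kmin_mem_if_translates[OF \<open>A \<subseteq> S\<close>])
    show "finite (F n) \<and> F n \<subseteq> S \<inter> {0<..<1 / real n}" if "n \<ge> 1" for n
      using F[rule_format, OF that] by blast
    show "(\<Union>t\<in>F n. ltrans S t A) \<in> bplus S r q" if "n \<ge> 1" for n
      using q[OF \<open>r \<in> Oplus S\<close> that] by (simp add: C_def)
  qed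
qed

lemma minimal_left_ideal_finite_translates:
  assumes L: "minimal_left_ideal S (Oplus S) L" and "p \<in> L" "A \<in> p" and "0 < e"
  shows "\<exists>F. finite F \<and> F \<noteq> {} \<and> F \<subseteq> S \<inter> {0<..<e} \<and> (\<forall>q\<in>L. (\<Union>t\<in>F. ltrans S t A) \<in> q)"
proof -
  have LO: "L \<subseteq> Oplus S" using L by (simp add: minimal_left_ideal_def left_ideal_def)
  \<comment> \<open>Each \<open>q \<in> L\<close> has \<open>p \<in> O\<^sup>+ + q\<close>, hence \<open>-x + A \<in> q\<close> for some \<open>x < e\<close>; \<open>L\<close> is compact.\<close>
  have cover: "L \<subseteq> (\<Union>x\<in>S \<inter> {0<..<e}. beta_hat S (ltrans S x A))"
  proof
    fix q assume "q \<in> L"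
    then have uq: "ultrafilter_on S q" using LO by (auto simp: mem_Oplus)
    have "p \<in> (\<lambda>r. bplus S r q) ` Oplus S"
      using Oplus.minimal_left_ideal_eq_image[OF L \<open>q \<in> L\<close>] \<open>p \<in> L\<close> by simp
    then obtain r where r: "r \<in> Oplus S" "p = bplus S r q" by blast
    then have ur: "ultrafilter_on S r" by (simp add: mem_Oplus)
    have "ltrans_in S q A \<in> r" "S \<inter> {0<..<e} \<in> r"
      using \<open>A \<in> p\<close> r \<open>0 < e\<close> by (simp_all add: mem_bplus mem_Oplus)
    then have "ltrans_in S q A \<inter> (S \<inter> {0<..<e}) \<noteq> {}"
      using ultrafilter_on_Int[OF ur] ultrafilter_on_empty[OF ur] by metis
    then obtain x where "x \<in> ltrans_in S q A \<inter> (S \<inter> {0<..<e})" by blast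
    then have "x \<in> S \<inter> {0<..<e}" "ltrans S x A \<in> q" by (simp_all add: ltrans_in_def)
    then show "q \<in> (\<Union>x\<in>S \<inter> {0<..<e}. beta_hat S (ltrans S x A))"
      using uq by (auto simp: mem_beta_hat)
  qed
  obtain \<F> where \<F>: "finite \<F>" "\<F> \<subseteq> (\<lambda>x. beta_hat S (ltrans S x A)) ` (S \<inter> {0<..<e})" "L \<subseteq> \<Union>\<F>"
    using Oplus.compactin_minimal_left_ideal[OF L] cover openin_beta_hat[OF ltrans_subset]
    unfolding compactin_def by (metis (no_types, lifting) imageE)
  then obtain F where F: "F \<subseteq> S \<inter> {0<..<e}" "finite F" "\<F> = (\<lambda>x. beta_hat S (ltrans S x A)) ` F"
    by (meson finite_subset_image)
  have "(\<Union>t\<in>F. ltrans S t A) \<in> q" if "q \<in> L" for q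
  proof -
    obtain t where "t \<in> F" "q \<in> beta_hat S (ltrans S t A)" using \<F> F \<open>q \<in> L\<close> by blast
    then have "ultrafilter_on S q" "ltrans S t A \<in> q" by (simp_all add: mem_beta_hat)
    then show ?thesis
      using ultrafilter_on_mono \<open>t \<in> F\<close> ltrans_subset by (metis UN_least UN_upper)
  qed
  moreover have "F \<noteq> {}" using \<F> F \<open>p \<in> L\<close> by blast
  ultimately show ?thesis using F by blast
qed

lemma exists_common_translate:
  assumes p: "p \<in> Oplus S" and \<delta>: "\<And>n. n \<ge> 1 \<Longrightarrow> \<delta> n \<le> 1 / real n"
    and D: "\<And>n g. n \<ge> 1 \<Longrightarrow> g \<in> S \<Longrightarrow> g < \<delta> n \<Longrightarrow> ltrans S g (C n) \<in> p"
    and G: "finite G" "G \<subseteq> S" and "0 < \<mu>"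
  shows "\<exists>x\<in>S. x < \<mu> \<and> (\<forall>g\<in>G. \<forall>n\<ge>1. g < \<delta> n \<longrightarrow> g + x \<in> C n)"
proof -
  have up: "ultrafilter_on S p" using p by (simp add: mem_Oplus)
  \<comment> \<open>Only finitely many \<open>n\<close> matter: \<open>g < \<delta> n \<le> 1/n\<close> forces \<open>n < 1/g\<close>.\<close>
  define P where "P = {(g, n). g \<in> G \<and> 1 \<le> n \<and> g < \<delta> n}"
  have "P \<subseteq> (SIGMA g:G. {..nat \<lceil>1 / g\<rceil>})"
  proof
    fix z assume "z \<in> P"
    then obtain g n where z: "z = (g, n)" "g \<in> G" "1 \<le> n" "g < \<delta> n" by (auto simp: P_def)
    then have "0 < g" "g < 1 / real n" using G pos_mem \<delta>[of n] by auto
    moreover have "0 < real n" using \<open>1 \<le> n\<close> by simp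
    ultimately have "real n < 1 / g" by (simp add: field_simps)
    then have "n \<le> nat \<lceil>1 / g\<rceil>" by linarith
    then show "z \<in> (SIGMA g:G. {..nat \<lceil>1 / g\<rceil>})" using z by simp
  qed
  moreover have "finite (SIGMA g:G. {..nat \<lceil>1 / g\<rceil>})" using G(1) by blast
  ultimately have "finite P" by (rule finite_subset)
  define \<F> where "\<F> = insert (S \<inter> {0<..<\<mu>}) ((\<lambda>(g, n). ltrans S g (C n)) ` P)"
  have "\<F> \<subseteq> p"
    using p \<open>0 < \<mu>\<close> D G(2) by (auto simp: \<F>_def P_def mem_Oplus)
  moreover have "finite \<F>" using \<open>finite P\<close> by (simp add: \<F>_def)
  ultimately have "S \<inter> \<Inter>\<F> \<in> p" by (rule ultrafilter_on_Inter[OF up, rotated])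
  then obtain x where x: "x \<in> S \<inter> \<Inter>\<F>" using ultrafilter_on_empty[OF up] by (metis ex_in_conv)
  then have "x \<in> S" "x < \<mu>" by (auto simp: \<F>_def)
  moreover have "g + x \<in> C n" if "g \<in> G" "n \<ge> 1" "g < \<delta> n" for g n
    using x that by (auto simp: \<F>_def P_def mem_ltrans)
  ultimately show ?thesis by blast
qed

lemma minimal_left_ideal_translates_eventually:
  assumes L: "minimal_left_ideal S (Oplus S) L" and "p \<in> L" "A \<in> p" and "0 < e"
  shows "\<exists>F d. finite F \<and> F \<noteq> {} \<and> F \<subseteq> S \<inter> {0<..<e} \<and> 0 < d \<and>
    (\<forall>g\<in>S. g < d \<longrightarrow> ltrans S g (\<Union>t\<in>F. ltrans S t A) \<in> p)"
proof -
  obtain F where F: "finite F" "F \<noteq> {}" "F \<subseteq> S \<inter> {0<..<e}"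
    and FL: "\<And>q. q \<in> L \<Longrightarrow> (\<Union>t\<in>F. ltrans S t A) \<in> q"
    using minimal_left_ideal_finite_translates[OF assms] by blast
  have "ltrans_in S p (\<Union>t\<in>F. ltrans S t A) \<in> v" if "v \<in> Oplus S" for v
  proof -
    have "bplus S v p \<in> L"
      using L \<open>p \<in> L\<close> that by (auto simp: minimal_left_ideal_def left_ideal_def)
    then have "(\<Union>t\<in>F. ltrans S t A) \<in> bplus S v p" by (rule FL)
    then show ?thesis by (simp add: mem_bplus)
  qed
  then obtain d where "0 < d" "S \<inter> {0<..<d} \<subseteq> ltrans_in S p (\<Union>t\<in>F. ltrans S t A)"
    using Oplus_eventually by blast
  then have "\<forall>g\<in>S. g < d \<longrightarrow> ltrans S g (\<Union>t\<in>F. ltrans S t A) \<in> p"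
    using pos_mem by (auto simp: ltrans_in_def)
  then show ?thesis using F \<open>0 < d\<close> by blast
qed

lemma pw_syndetic_near_zeroI:
  assumes F: "\<And>n. n \<ge> 1 \<Longrightarrow> finite (F n) \<and> F n \<noteq> {} \<and> F n \<subseteq> {0<..<1 / real n} \<inter> S"
    and \<delta>: "\<And>n. n \<ge> 1 \<Longrightarrow> 0 < \<delta> n \<and> \<delta> n < 1 / real n"
    and common: "\<And>G \<mu>. finite G \<Longrightarrow> G \<subseteq> S \<Longrightarrow> 0 < \<mu> \<Longrightarrow>
      \<exists>x\<in>S. x < \<mu> \<and> (\<forall>g\<in>G. \<forall>n\<ge>1. g < \<delta> n \<longrightarrow> g + x \<in> (\<Union>t\<in>F n. ltrans S t A))"
  shows "pw_syndetic_near_zero S A"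
proof -
  have part1: "\<forall>n\<ge>1. finite (F n) \<and> F n \<noteq> {} \<and> F n \<subseteq> {0<..<1 / real n} \<inter> S
      \<and> 0 < \<delta> n \<and> \<delta> n < 1 / real n"
    using F \<delta> by blast
  have part2: "\<forall>G. finite G \<and> G \<noteq> {} \<and> G \<subseteq> S \<longrightarrow> (\<forall>\<mu>>0. \<exists>x\<in>S. 0 < x \<and> x < \<mu> \<and>
      (\<forall>n\<ge>1. (\<lambda>g. g + x) ` (G \<inter> {0<..<\<delta> n}) \<subseteq> (\<Union>t\<in>F n. ltrans S t A)))"
  proof (intro allI impI)
    fix G :: "real set" and \<mu> :: real assume "finite G \<and> G \<noteq> {} \<and> G \<subseteq> S" and "0 < \<mu>"
    then have "finite G" "G \<subseteq> S" by auto
    then obtain x where x: "x \<in> S" "x < \<mu>"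
      and "\<forall>g\<in>G. \<forall>n\<ge>1. g < \<delta> n \<longrightarrow> g + x \<in> (\<Union>t\<in>F n. ltrans S t A)"
      using common[OF _ _ \<open>0 < \<mu>\<close>] by blast
    then have "\<forall>n\<ge>1. (\<lambda>g. g + x) ` (G \<inter> {0<..<\<delta> n}) \<subseteq> (\<Union>t\<in>F n. ltrans S t A)"
      by (auto simp: translate_subset_iff[OF \<open>G \<subseteq> S\<close>])
    then show "\<exists>x\<in>S. 0 < x \<and> x < \<mu> \<and>
        (\<forall>n\<ge>1. (\<lambda>g. g + x) ` (G \<inter> {0<..<\<delta> n}) \<subseteq> (\<Union>t\<in>F n. ltrans S t A))"
      using x pos_mem by blast
  qed
  show ?thesis
    unfolding pw_syndetic_near_zero_def
    by (rule exI[of _ F], rule exI[of _ \<delta>], rule conjI[OF part1 part2])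
qed

lemma Kmin_imp_pw_syndetic_near_zero:
  assumes "p \<in> Kmin S (Oplus S)" and "A \<in> p"
  shows "pw_syndetic_near_zero S A"
proof -
  obtain L where L: "minimal_left_ideal S (Oplus S) L" "p \<in> L"
    using Oplus.mem_Kmin_imp_minimal_left_ideal[OF assms(1)] by blast
  have "\<forall>n. \<exists>Fd. 1 \<le> n \<longrightarrow> finite (fst Fd) \<and> fst Fd \<noteq> {} \<and> fst Fd \<subseteq> S \<inter> {0<..<1 / real n}
    \<and> 0 < snd Fd \<and> (\<forall>g\<in>S. g < snd Fd \<longrightarrow> ltrans S g (\<Union>t\<in>fst Fd. ltrans S t A) \<in> p)"
    using minimal_left_ideal_translates_eventually[OF L \<open>A \<in> p\<close>] by fastforce
  then obtain Fd where Fd: "\<And>n. 1 \<le> n \<Longrightarrow> finite (fst (Fd n)) \<and> fst (Fd n) \<noteq> {}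
    \<and> fst (Fd n) \<subseteq> S \<inter> {0<..<1 / real n} \<and> 0 < snd (Fd n)
    \<and> (\<forall>g\<in>S. g < snd (Fd n) \<longrightarrow> ltrans S g (\<Union>t\<in>fst (Fd n). ltrans S t A) \<in> p)"
    by (metis choice)
  define F where "F n = fst (Fd n)" for n
  \<comment> \<open>The definition demands \<open>\<delta> n < 1/n\<close> strictly.\<close>
  define \<delta> where "\<delta> n = min (snd (Fd n)) (1 / (2 * real n))" for n
  have \<delta>: "0 < \<delta> n" "\<delta> n < 1 / real n" if "1 \<le> n" for n
  proof -
    have "0 < real n" using that by simp
    then show "0 < \<delta> n" using Fd[OF that] by (simp add: \<delta>_def)
    have "\<delta> n \<le> 1 / (2 * real n)" by (simp add: \<delta>_def)
    also have "\<dots> < 1 / real n" using \<open>0 < real n\<close> by (simp add: field_simps)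
    finally show "\<delta> n < 1 / real n" .
  qed
  have pO: "p \<in> Oplus S" using L by (auto simp: minimal_left_ideal_def left_ideal_def)
  show ?thesis
  proof (rule pw_syndetic_near_zeroI)
    show "finite (F n) \<and> F n \<noteq> {} \<and> F n \<subseteq> {0<..<1 / real n} \<inter> S" if "n \<ge> 1" for n
      using Fd[OF that] by (simp add: F_def Int_commute)
    show "0 < \<delta> n \<and> \<delta> n < 1 / real n" if "n \<ge> 1" for n
      using \<delta>[OF that] by blast
    show "\<exists>x\<in>S. x < \<mu> \<and> (\<forall>g\<in>G. \<forall>n\<ge>1. g < \<delta> n \<longrightarrow> g + x \<in> (\<Union>t\<in>F n. ltrans S t A))"
      if "finite G" "G \<subseteq> S" "0 < \<mu>" for G \<mu>
    proof (rule exists_common_translate[OF pO _ _ that])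
      show "\<delta> n \<le> 1 / real n" if "n \<ge> 1" for n using \<delta>(2)[OF that] by simp
      show "ltrans S g (\<Union>t\<in>F n. ltrans S t A) \<in> p" if "n \<ge> 1" "g \<in> S" "g < \<delta> n" for n g
        using Fd[OF that(1)] that by (auto simp: F_def \<delta>_def)
    qed
  qed
qed

lemma pw_syndetic_near_zero_iff_Kmin:
  "A \<subseteq> S \<Longrightarrow> pw_syndetic_near_zero S A \<longleftrightarrow> (\<exists>p\<in>Kmin S (Oplus S). A \<in> p)"
  using pw_syndetic_near_zero_imp_Kmin Kmin_imp_pw_syndetic_near_zero by blast

lemma Kfilt_eq_Inter_Kmin: "Kfilt S = \<Inter>(Kmin S (Oplus S))"
proof (rule set_eqI)
  fix A
  have uK: "\<And>p. p \<in> Kmin S (Oplus S) \<Longrightarrow> ultrafilter_on S p"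
    using Oplus.Kmin_subset by (auto simp: mem_Oplus)
  obtain p0 where p0: "p0 \<in> Kmin S (Oplus S)" using Oplus.Kmin_nonempty by blast
  have "A \<in> Kfilt S \<longleftrightarrow> A \<subseteq> S \<and> (\<forall>p\<in>Kmin S (Oplus S). S - A \<notin> p)"
    by (simp add: Kfilt_def pw_syndetic_near_zero_iff_Kmin)
  also have "\<dots> \<longleftrightarrow> A \<in> \<Inter>(Kmin S (Oplus S))"
  proof
    assume H: "A \<subseteq> S \<and> (\<forall>p\<in>Kmin S (Oplus S). S - A \<notin> p)"
    show "A \<in> \<Inter>(Kmin S (Oplus S))"
    proof
      fix p assume "p \<in> Kmin S (Oplus S)"
      then show "A \<in> p" using H ultrafilter_on_Diff_iff[OF uK] by blast
    qed
  next
    assume H: "A \<in> \<Inter>(Kmin S (Oplus S))"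
    then have "A \<subseteq> S" using ultrafilter_on_subset[OF uK[OF \<open>p0 \<in> Kmin S (Oplus S)\<close>]] p0 by blast
    moreover have "\<forall>p\<in>Kmin S (Oplus S). S - A \<notin> p"
      using H ultrafilter_on_Diff_iff[OF uK] \<open>A \<subseteq> S\<close> by blast
    ultimately show "A \<subseteq> S \<and> (\<forall>p\<in>Kmin S (Oplus S). S - A \<notin> p)" by blast
  qed
  finally show "A \<in> Kfilt S \<longleftrightarrow> A \<in> \<Inter>(Kmin S (Oplus S))" .
qed

end

lemma dense_pos_subsemigroupI: "dense_subsemigroup S \<Longrightarrow> dense_pos_subsemigroup S"
  unfolding dense_subsemigroup_def dense_pos_subsemigroup_def real_add_subsemigroup_def
    dense_pos_subsemigroup_axioms_def
  by (auto simp: subset_iff)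

theorem lemma3p5:
  fixes S :: "real set"
  assumes "dense_subsemigroup S"
  shows "filter_on S (Kfilt S)
    \<and> (betaTop S) closure_of (Kmin S (Oplus S)) = filter_closure S (Kfilt S)
    \<and> compactin (betaTop S) (filter_closure S (Kfilt S))
    \<and> filter_closure S (Kfilt S) \<noteq> {}
    \<and> (\<forall>p\<in>filter_closure S (Kfilt S). \<forall>q\<in>filter_closure S (Kfilt S).
         bplus S p q \<in> filter_closure S (Kfilt S))"
proof -
  interpret dense_pos_subsemigroup S using dense_pos_subsemigroupI[OF assms] .
  let ?K = "Kmin S (Oplus S)"
  have K: "?K \<subseteq> betaS S" using Oplus.Kmin_subset Oplus.T_ultrafilter by auto
  have closure: "betaTop S closure_of ?K = filter_closure S (Kfilt S)"
    using closure_of_betaTop_eq_filter_closure[OF K] by (simp add: Kfilt_eq_Inter_Kmin)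
  have "filter_on S (Kfilt S)"
    unfolding Kfilt_eq_Inter_Kmin
    by (rule filter_on_Inter_ultrafilters[OF Oplus.Kmin_nonempty]) (use K in auto)
  moreover have "compactin (betaTop S) (filter_closure S (Kfilt S))"
    using closedin_compact_space[OF compact_space_betaTop] closure by (metis closedin_closure_of)
  moreover have "filter_closure S (Kfilt S) \<noteq> {}"
    using closure_of_subset[of ?K "betaTop S"] K Oplus.Kmin_nonempty closure by auto
  ultimately show ?thesis
    using closure Oplus.bplus_closure_Kmin by auto
qed

end
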